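(* Let $\alpha\in(0,1)$ and let the walk start at $X_0=[\alpha N]$. Write $a=\alpha\wedge(1-\alpha)$ and $b=\alpha\vee(1-\alpha)$. (i) For the symmetric walk, $R_N/N$ converges in distribution as $N\to\infty$ to the absolutely continuous probability measure $G_{0,\alpha}$ on $[a,1]$. This measure is characterized by the fact that for every $\beta\ge0$, $$\lim_{N\to\infty}P_{[\alpha N]}(R_N/N\ge\beta)=\begin{cases}1,&0\le\beta\le a,\\ \dfrac{a}{\beta},& a<\beta<b,\\ \dfrac{1-\beta}{\beta},& b\le\beta\le1,\\ 0,&\beta>1.\end{cases}$$ Equivalently, $G_{0,\alpha}$ has density $g_\alpha(\beta)=a/\beta^2$ for $a<\beta<b$, $g_\alpha(\beta)=1/\beta^2$ for $b\le\beta\le1$, and $g_\alpha(\beta)=0$ otherwise. (ii) For the weakly asymmetric walk with parameter $c>0$, $R_N/N$ converges in distribution to the absolutely continuous probability measure $G_{c,\alpha}$ on $[a,1]$. This measure is characterized by the fact that for every $\beta\ge0$, $$\lim_{N\to\infty}P_{[\alpha N]}(R_N/N\ge\beta)=\begin{cases}1,&0\le\beta\le a,\\ \dfrac{1-e^{-4c\alpha}}{1-e^{-4c\beta}},&\alpha\le\beta\le1-\alpha,\\ \dfrac{1-e^{4c(1-\alpha)}}{1-e^{4c\beta}},&1-\alpha\le\beta\le\alpha,\\ \dfrac{e^{-4c\alpha}\big(e^{4c(1-\beta)}-1\big)}{1-e^{-4c\beta}},& b\le\beta\le1,\\ 0,&\beta>1.\end{cases}$$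
   Context: Fix $N\ge2$ and let $\mathcal T_N=\{0,1,\dots,N\}$. Let $(X_n)_{n\ge0}$ be a nearest-neighbour random walk on $\mathcal T_N$. At each step it moves from its current position $x$ to $x+1$ with probability $p_N$ and to $x-1$ with probability $q_N=1-p_N$, independently of the past. The walk is stopped the first time it is at $0$ or $N$. $P_x$ denotes the law of the walk started at $X_0=x$. The walk is called: - symmetric if $p_N=q_N=1/2$; - weakly asymmetric (with parameter $c>0$ fixed) if $q_N=1/2-c/N$ and $p_N=1/2+c/N$, for $N$ large enough that these lie in $(0,1)$; - asymmetric if $p_N=p$ and $q_N=q$ are fixed with $p+q=1$ and $q<p$. For $a\in\mathcal T_N$ let $T_a=\inf\{n\ge1:X_n=a\}$, and let $\tau_N=T_0\wedge T_N$ (the exit time). Let $G(y)=\sum_{k=0}^{\tau_N}\mathbf 1\{X_k=y\}$ be the number of visits to $y$ up to and including the exit time. The range is $R_N=\#\{y\in\mathcal T_N:G(y)\ge1\}$. Throughout, $[\cdot]$ denotes the integer part. *)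

theory Defs
  imports "HOL-Probability.Probability"
begin

(* Path space: i.i.d. steps, True = step +1 (prob p), False = step -1 (prob 1-p). *)
definition path_space :: "real \<Rightarrow> bool stream measure" where
  "path_space p = stream_space (measure_pmf (bernoulli_pmf p))"

definition walk_pos :: "nat \<Rightarrow> bool stream \<Rightarrow> nat \<Rightarrow> int" where
  "walk_pos x \<omega> n = int x + (\<Sum>k<n. if snth \<omega> k then 1 else -1)"

definition exit_time :: "nat \<Rightarrow> nat \<Rightarrow> bool stream \<Rightarrow> nat" where
  "exit_time N x \<omega> = (LEAST n. n \<ge> 1 \<and> (walk_pos x \<omega> n = 0 \<or> walk_pos x \<omega> n = int N))"

(* R_N = #{y in {0..N}. G(y) >= 1}, G(y) = visits to y at times 0..tau_N. *)
definition range_walk :: "nat \<Rightarrow> nat \<Rightarrow> bool stream \<Rightarrow> nat" where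
  "range_walk N x \<omega> = card ({0..int N} \<inter> {walk_pos x \<omega> k | k. k \<le> exit_time N x \<omega>})"

definition range_law :: "real \<Rightarrow> nat \<Rightarrow> nat \<Rightarrow> real measure" where
  "range_law p N x = distr (path_space p) borel (\<lambda>\<omega>. real (range_walk N x \<omega>) / real N)"

definition range_tail :: "real \<Rightarrow> nat \<Rightarrow> nat \<Rightarrow> real \<Rightarrow> real" where
  "range_tail p N x \<beta> = measure (path_space p)
      {\<omega> \<in> space (path_space p). real (range_walk N x \<omega>) / real N \<ge> \<beta>}"

definition start_pt :: "real \<Rightarrow> nat \<Rightarrow> nat" where
  "start_pt \<alpha> N = nat \<lfloor>\<alpha> * real N\<rfloor>"

definition tail_sym :: "real \<Rightarrow> real \<Rightarrow> real" where
  "tail_sym \<alpha> \<beta> = (let a = min \<alpha> (1 - \<alpha>); b = max \<alpha> (1 - \<alpha>) in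
     if \<beta> \<le> a then 1
     else if \<beta> < b then a / \<beta>
     else if \<beta> \<le> 1 then (1 - \<beta>) / \<beta>
     else 0)"

definition dens_sym :: "real \<Rightarrow> real \<Rightarrow> real" where
  "dens_sym \<alpha> \<beta> = (let a = min \<alpha> (1 - \<alpha>); b = max \<alpha> (1 - \<alpha>) in
     if a < \<beta> \<and> \<beta> < b then a / \<beta>\<^sup>2
     else if b \<le> \<beta> \<and> \<beta> \<le> 1 then 1 / \<beta>\<^sup>2
     else 0)"

definition tail_weak :: "real \<Rightarrow> real \<Rightarrow> real \<Rightarrow> real" where
  "tail_weak c \<alpha> \<beta> = (let a = min \<alpha> (1 - \<alpha>); b = max \<alpha> (1 - \<alpha>) in
     if \<beta> \<le> a then 1
     else if \<alpha> \<le> \<beta> \<and> \<beta> \<le> 1 - \<alpha> then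
       (1 - exp (-4*c*\<alpha>)) / (1 - exp (-4*c*\<beta>))
     else if 1 - \<alpha> \<le> \<beta> \<and> \<beta> \<le> \<alpha> then
       (1 - exp (4*c*(1 - \<alpha>))) / (1 - exp (4*c*\<beta>))
     else if b \<le> \<beta> \<and> \<beta> \<le> 1 then
       exp (-4*c*\<alpha>) * (exp (4*c*(1 - \<beta>)) - 1) / (1 - exp (-4*c*\<beta>))
     else 0)"

end

theory Submission
  imports Defs "HOL-Real_Asymp.Real_Asymp"
begin

(* Every function that is harmonic for the walk on an interval is affine in the scale
   function s_p (s_p(z) = z for p = 1/2, s_p(z) = 1 - ((1-p)/p)^z otherwise); this gives
   the ruin probabilities in closed form.  A walk from x visits at least m sites iff it
   climbs to level m - 1 and then exits at 0, or descends to N - m + 1 and then exits at N,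
   and it exits almost surely.  Hence P_x(R_N >= m) is an explicit rational expression
   (tail_formula) in four values of s_p.  After normalisation, s_p at level zeta N tends to
   Phi(zeta) = zeta (symmetric) or 1 - exp(-4 c zeta) (weakly asymmetric), so the tails
   converge to limit_tail Phi, whose negative derivative limit_density Phi is a density
   on [0, 1].  Identifying limit_tail with the explicit tails of the statement, tail
   convergence gives convergence of distribution functions, hence weak convergence. *)

section \<open>The walk and its exit events\<close>

definition step_of :: "bool \<Rightarrow> int" where
  "step_of b = (if b then 1 else -1)"

definition walk :: "int \<Rightarrow> bool stream \<Rightarrow> nat \<Rightarrow> int" where
  "walk z \<omega> n = z + (\<Sum>k<n. step_of (\<omega> !! k))"

lemma walk_0 [simp]: "walk z \<omega> 0 = z"
  by (simp add: walk_def)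

lemma walk_Suc: "walk z \<omega> (Suc n) = walk z \<omega> n + step_of (\<omega> !! n)"
  by (simp add: walk_def)

lemma walk_Suc_Cons [simp]: "walk z (b ## \<omega>) (Suc n) = walk (z + step_of b) \<omega> n"
  unfolding walk_def sum.lessThan_Suc_shift by simp

lemma walk_pos_eq_walk: "walk_pos x \<omega> n = walk (int x) \<omega> n"
  unfolding walk_pos_def walk_def step_of_def by simp

lemma walk_mirror: "walk (c - z) (smap Not \<omega>) n = c - walk z \<omega> n"
  unfolding walk_def by (auto simp: step_of_def sum_negf[symmetric] intro!: sum.cong)

text \<open>Only finitely many steps matter for any event about the walk up to a fixed time,
  so such events are measurable in the path space.\<close>

lemma stake_measurable:
  "stake n \<in> stream_space (measure_pmf (q::bool pmf)) \<rightarrow>\<^sub>M count_space UNIV"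
  by (subst measurable_cong_sets[OF sets_stream_space_cong[OF sets_measure_pmf_count_space] refl])
     measurable

lemma pred_stake [measurable]:
  "Measurable.pred (stream_space (measure_pmf (q::bool pmf))) (\<lambda>\<omega>. P (stake n \<omega>))"
  using stake_measurable by (rule measurable_compose) simp

lemma sum_stake: "k \<le> n \<Longrightarrow> (\<Sum>i<k. step_of (stake n \<omega> ! i)) = (\<Sum>i<k. step_of (\<omega> !! i))"
  by (intro sum.cong) auto

definition exit_via :: "nat \<Rightarrow> int \<Rightarrow> (int \<Rightarrow> bool) \<Rightarrow> int \<Rightarrow> bool stream \<Rightarrow> bool" where
  "exit_via N t Q z \<omega> \<longleftrightarrow> (\<exists>n. walk z \<omega> n = t \<and> (\<forall>k<n. 0 < walk z \<omega> k \<and> walk z \<omega> k < int N)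
      \<and> (\<exists>k\<le>n. Q (walk z \<omega> k)))"

abbreviation exits_at :: "nat \<Rightarrow> int \<Rightarrow> int \<Rightarrow> bool stream \<Rightarrow> bool" where
  "exits_at N t z \<equiv> exit_via N t (\<lambda>w. w = t) z"

lemma exit_via_measurable [measurable]:
  "Measurable.pred (stream_space (measure_pmf (q::bool pmf))) (exit_via N t Q z)"
proof -
  define F where "F n l \<longleftrightarrow> (z + (\<Sum>i<n. step_of (l ! i))) = t \<and>
     (\<forall>k<n. 0 < z + (\<Sum>i<k. step_of (l ! i)) \<and> z + (\<Sum>i<k. step_of (l ! i)) < int N) \<and>
     (\<exists>k\<le>n. Q (z + (\<Sum>i<k. step_of (l ! i))))" for n l
  have "exit_via N t Q z = (\<lambda>\<omega>. \<exists>n. F n (stake n \<omega>))"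
    unfolding exit_via_def F_def fun_eq_iff
    by (intro allI ex_cong1) (simp add: walk_def sum_stake cong: conj_cong)
  then show ?thesis by simp
qed

lemma exit_via_Cons:
  assumes "0 < z" "z < int N" "\<not> Q z" "z \<noteq> t"
  shows "exit_via N t Q z (b ## \<omega>) = exit_via N t Q (z + step_of b) \<omega>"
proof
  assume "exit_via N t Q z (b ## \<omega>)"
  then obtain n where n: "walk z (b ## \<omega>) n = t"
      "\<forall>k<n. 0 < walk z (b ## \<omega>) k \<and> walk z (b ## \<omega>) k < int N"
      "\<exists>k\<le>n. Q (walk z (b ## \<omega>) k)"
    unfolding exit_via_def by blast
  then obtain m where m: "n = Suc m" using assms by (cases n) auto
  from n(3) obtain k where k: "k \<le> n" "Q (walk z (b ## \<omega>) k)" by blast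
  then obtain j where j: "k = Suc j" using assms by (cases k) auto
  have "walk (z + step_of b) \<omega> m = t" using n(1) m by simp
  moreover have "\<forall>k<m. 0 < walk (z + step_of b) \<omega> k \<and> walk (z + step_of b) \<omega> k < int N"
    using n(2) m by (metis Suc_mono walk_Suc_Cons)
  moreover have "\<exists>k\<le>m. Q (walk (z + step_of b) \<omega> k)" using k j m by (intro exI[of _ j]) auto
  ultimately show "exit_via N t Q (z + step_of b) \<omega>" unfolding exit_via_def by blast
next
  assume "exit_via N t Q (z + step_of b) \<omega>"
  then obtain m where m: "walk (z + step_of b) \<omega> m = t"
      "\<forall>k<m. 0 < walk (z + step_of b) \<omega> k \<and> walk (z + step_of b) \<omega> k < int N"
      "\<exists>k\<le>m. Q (walk (z + step_of b) \<omega> k)"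
    unfolding exit_via_def by blast
  from m(3) obtain j where j: "j \<le> m" "Q (walk (z + step_of b) \<omega> j)" by blast
  have "\<forall>k<Suc m. 0 < walk z (b ## \<omega>) k \<and> walk z (b ## \<omega>) k < int N"
  proof (intro allI impI)
    fix k assume "k < Suc m"
    then show "0 < walk z (b ## \<omega>) k \<and> walk z (b ## \<omega>) k < int N"
      using m(2) assms by (cases k) auto
  qed
  moreover have "walk z (b ## \<omega>) (Suc m) = t" using m by simp
  moreover have "\<exists>k\<le>Suc m. Q (walk z (b ## \<omega>) k)" using j by (intro exI[of _ "Suc j"]) auto
  ultimately show "exit_via N t Q z (b ## \<omega>)" unfolding exit_via_def by blast
qed

lemma exit_via_visited: "Q z \<Longrightarrow> exit_via N t Q z \<omega> = exits_at N t z \<omega>"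
  unfolding exit_via_def by (intro ex_cong1) (metis le0 order_refl walk_0)

lemma exit_via_exits_at: "exit_via N t Q z \<omega> \<Longrightarrow> exits_at N t z \<omega>"
  unfolding exit_via_def by (metis order_refl)

lemma exit_via_target: "Q t \<Longrightarrow> exit_via N t Q t \<omega>"
  unfolding exit_via_def by (intro exI[of _ 0]) auto

lemma not_exit_via_outside:
  "z \<le> 0 \<or> z \<ge> int N \<Longrightarrow> \<not> (z = t \<and> Q t) \<Longrightarrow> \<not> exit_via N t Q z \<omega>"
  unfolding exit_via_def by (auto elim!: allE[of _ 0] simp: le_Suc_eq)

section \<open>Exit probabilities are harmonic\<close>

definition exit_prob :: "real \<Rightarrow> nat \<Rightarrow> int \<Rightarrow> (int \<Rightarrow> bool) \<Rightarrow> int \<Rightarrow> real" where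
  "exit_prob p N t Q z = measure (path_space p) {\<omega> \<in> space (path_space p). exit_via N t Q z \<omega>}"

definition harmonic :: "real \<Rightarrow> int \<Rightarrow> int \<Rightarrow> (int \<Rightarrow> real) \<Rightarrow> bool" where
  "harmonic p lo hi h \<longleftrightarrow> (\<forall>z. lo < z \<and> z < hi \<longrightarrow> h z = p * h (z + 1) + (1 - p) * h (z - 1))"

lemma prob_space_path_space: "prob_space (path_space p)"
  unfolding path_space_def
  by (rule prob_space.prob_space_stream_space) (rule prob_space_measure_pmf)

lemma exit_prob_cong:
  "(\<And>\<omega>. exit_via N t Q z \<omega> = exit_via N t' Q' z' \<omega>) \<Longrightarrow> exit_prob p N t Q z = exit_prob p N t' Q' z'"
  unfolding exit_prob_def by simp

lemma exit_prob_certain: "(\<And>\<omega>. exit_via N t Q z \<omega>) \<Longrightarrow> exit_prob p N t Q z = 1"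
  unfolding exit_prob_def using prob_space.prob_space[OF prob_space_path_space] by simp

lemma exit_prob_impossible: "(\<And>\<omega>. \<not> exit_via N t Q z \<omega>) \<Longrightarrow> exit_prob p N t Q z = 0"
  unfolding exit_prob_def by simp

text \<open>Conditioning on the first step (the path space is a product of i.i.d. steps)
  shows that exit probabilities are harmonic away from \<open>t\<close> and from \<open>Q\<close>.\<close>

lemma exit_prob_step:
  assumes p: "0 \<le> p" "p \<le> 1" and z: "0 < z" "z < int N" "\<not> Q z" "z \<noteq> t"
  shows "exit_prob p N t Q z = p * exit_prob p N t Q (z + 1) + (1 - p) * exit_prob p N t Q (z - 1)"
proof -
  interpret B: prob_space "measure_pmf (bernoulli_pmf p)" by (rule prob_space_measure_pmf)
  have "ennreal (exit_prob p N t Q z)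
      = (\<integral>\<^sup>+b. ennreal (exit_prob p N t Q (z + step_of b)) \<partial>measure_pmf (bernoulli_pmf p))"
    unfolding exit_prob_def path_space_def
    by (subst prob_space.prob_stream_space[OF prob_space_measure_pmf])
       (auto simp: exit_via_Cons[of z N Q t, OF z] intro!: nn_integral_cong)
  also have "\<dots> = ennreal (exit_prob p N t Q (z + 1) * p + exit_prob p N t Q (z - 1) * (1 - p))"
    using p by (simp add: step_of_def exit_prob_def ennreal_mult' ennreal_plus[symmetric])
  finally show ?thesis
    by (subst (asm) ennreal_inj) (auto simp: exit_prob_def intro!: add_nonneg_nonneg mult_nonneg_nonneg p)
qed

lemma exit_prob_harmonic:
  assumes "0 \<le> p" "p \<le> 1" "0 \<le> lo" "hi \<le> int N" "\<And>z. lo < z \<Longrightarrow> z < hi \<Longrightarrow> \<not> Q z \<and> z \<noteq> t"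
  shows "harmonic p lo hi (exit_prob p N t Q)"
  unfolding harmonic_def using assms by (auto intro!: exit_prob_step)

text \<open>Discrete maximum principle: a harmonic function vanishing at both ends of an
  interval vanishes on it (its increments form a geometric sequence).\<close>

lemma harmonic_zero:
  fixes h :: "int \<Rightarrow> real"
  assumes p: "0 < p" "p < 1" and h: "harmonic p lo hi h"
    and h_lo: "h lo = 0" and h_hi: "h hi = 0" and z: "lo \<le> z" "z \<le> hi"
  shows "h z = 0"
proof -
  define \<rho> where "\<rho> = (1 - p) / p"
  have \<rho>: "\<rho> > 0" using p by (simp add: \<rho>_def)
  define d where "d k = h (lo + int k + 1) - h (lo + int k)" for k :: nat
  have increment: "lo + int k + 1 \<le> hi \<Longrightarrow> d k = \<rho> ^ k * d 0" for k
  proof (induction k)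
    case (Suc k)
    have "h (lo + int k + 1) = p * h (lo + int k + 1 + 1) + (1 - p) * h (lo + int k + 1 - 1)"
      using Suc.prems h unfolding harmonic_def by auto
    then have "d (Suc k) = \<rho> * d k" unfolding d_def \<rho>_def using p
      by (simp add: field_simps add.assoc)
    then show ?case using Suc by simp
  qed simp
  have h_value: "lo + int k \<le> hi \<Longrightarrow> h (lo + int k) = d 0 * (\<Sum>i<k. \<rho> ^ i)" for k
  proof (induction k)
    case (Suc k)
    have "h (lo + int (Suc k)) = h (lo + int k) + d k" unfolding d_def by (simp add: ac_simps)
    then show ?case using Suc increment[of k] by (simp add: algebra_simps)
  qed (simp add: h_lo)
  show ?thesis
  proof (cases "lo = hi")
    case False
    define L where "L = nat (hi - lo)"
    have L: "L \<ge> 1" "lo + int L = hi" using False z by (auto simp: L_def)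
    have "(\<Sum>i<L. \<rho> ^ i) \<ge> \<rho> ^ 0" using L \<rho> by (intro member_le_sum) auto
    moreover have "d 0 * (\<Sum>i<L. \<rho> ^ i) = 0" using h_value[of L] L h_hi by simp
    ultimately have "d 0 = 0" by simp
    then show ?thesis using h_value[of "nat (z - lo)"] z by simp
  qed (use z h_lo in simp)
qed

text \<open>The scale function of the walk: it is harmonic on the whole half-line, so every
  harmonic function is an affine function of it.\<close>

definition scale_fn :: "real \<Rightarrow> int \<Rightarrow> real" where
  "scale_fn p z = (if p = 1/2 then real_of_int z else 1 - ((1 - p) / p) ^ nat z)"

lemma scale_fn_0 [simp]: "scale_fn p 0 = 0"
  by (simp add: scale_fn_def)

lemma scale_fn_affine_harmonic:
  assumes "0 < p" "p < 1" "z \<ge> 1"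
  shows "A + B * scale_fn p z = p * (A + B * scale_fn p (z + 1)) + (1 - p) * (A + B * scale_fn p (z - 1))"
proof (cases "p = 1/2")
  case False
  define r where "r = (1 - p) / p"
  define k where "k = nat (z - 1)"
  have k: "nat (z + 1) = k + 2" "nat z = k + 1" "nat (z - 1) = k" using assms(3) by (auto simp: k_def)
  have "p * r * r + (1 - p) = r" using assms unfolding r_def by (simp add: field_simps)
  then have "r ^ k * (p * r * r + (1 - p)) = r ^ k * r" by simp
  then have key: "p * r ^ (k + 2) + (1 - p) * r ^ k = r ^ (k + 1)"
    by (simp add: algebra_simps power2_eq_square)
  have "p * (A + B * (1 - r ^ (k + 2))) + (1 - p) * (A + B * (1 - r ^ k))
      = A + B - B * (p * r ^ (k + 2) + (1 - p) * r ^ k)"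
    by (simp add: algebra_simps)
  also have "\<dots> = A + B * (1 - r ^ (k + 1))" by (simp only: key) (simp add: algebra_simps)
  finally show ?thesis using False unfolding scale_fn_def r_def[symmetric] k by simp
qed (simp add: scale_fn_def algebra_simps)

lemma scale_fn_strict_mono:
  assumes "1/2 \<le> p" "p < 1" "0 \<le> a" "a < b"
  shows "scale_fn p a < scale_fn p b"
proof (cases "p = 1/2")
  case False
  define r where "r = (1 - p) / p"
  have r: "0 < r" "r < 1" using assms False by (auto simp: r_def field_simps)
  have "r ^ nat b < r ^ nat a" using r assms by (intro power_strict_decreasing) auto
  then show ?thesis using False unfolding scale_fn_def r_def[symmetric] by simp
qed (use assms in \<open>simp add: scale_fn_def\<close>)

lemma scale_fn_pos: "1/2 \<le> p \<Longrightarrow> p < 1 \<Longrightarrow> 0 < z \<Longrightarrow> scale_fn p z > 0"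
  using scale_fn_strict_mono[of p 0 z] by simp

lemma harmonic_interpolation:
  assumes p: "1/2 \<le> p" "p < 1" and lo: "0 \<le> lo" "lo < hi" and h: "harmonic p lo hi h"
    and z: "lo \<le> z" "z \<le> hi"
  shows "h z = h lo + (h hi - h lo) * (scale_fn p z - scale_fn p lo) / (scale_fn p hi - scale_fn p lo)"
proof -
  define D where "D = scale_fn p hi - scale_fn p lo"
  have D: "D > 0" using scale_fn_strict_mono[OF p lo] by (simp add: D_def)
  define B where "B = (h hi - h lo) / D"
  define A where "A = h lo - B * scale_fn p lo"
  define g where "g w = h w - (A + B * scale_fn p w)" for w
  have g_harmonic: "harmonic p lo hi g" unfolding harmonic_def
  proof (intro allI impI)
    fix w assume w: "lo < w \<and> w < hi"
    then have "h w = p * h (w + 1) + (1 - p) * h (w - 1)" using h by (simp add: harmonic_def)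
    moreover have "A + B * scale_fn p w
        = p * (A + B * scale_fn p (w + 1)) + (1 - p) * (A + B * scale_fn p (w - 1))"
      using p w lo by (intro scale_fn_affine_harmonic) auto
    ultimately show "g w = p * g (w + 1) + (1 - p) * g (w - 1)"
      unfolding g_def by (simp add: algebra_simps)
  qed
  have "B * (scale_fn p hi - scale_fn p lo) = h hi - h lo" using D by (simp add: B_def D_def)
  then have "g hi = 0" by (simp add: g_def A_def algebra_simps)
  moreover have "g lo = 0" by (simp add: g_def A_def)
  ultimately have "g z = 0" using harmonic_zero[OF _ _ g_harmonic] p z by simp
  then have "h z = h lo + B * (scale_fn p z - scale_fn p lo)" by (simp add: g_def A_def algebra_simps)
  then show ?thesis by (simp add: B_def D_def)
qed


lemma exit_prob_interpolation:
  assumes p: "1/2 \<le> p" "p < 1" and "0 \<le> lo" "lo < hi" "hi \<le> int N"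
    and "\<And>w. lo < w \<Longrightarrow> w < hi \<Longrightarrow> \<not> Q w \<and> w \<noteq> t" and "lo \<le> z" "z \<le> hi"
  shows "exit_prob p N t Q z = exit_prob p N t Q lo + (exit_prob p N t Q hi - exit_prob p N t Q lo)
           * (scale_fn p z - scale_fn p lo) / (scale_fn p hi - scale_fn p lo)"
  using assms by (intro harmonic_interpolation exit_prob_harmonic) auto

lemma prob_exit_at_0:
  assumes p: "1/2 \<le> p" "p < 1" and N: "N \<ge> 1" and z: "0 \<le> z" "z \<le> int N"
  shows "exit_prob p N 0 (\<lambda>w. w = 0) z = (scale_fn p N - scale_fn p z) / scale_fn p N"
proof -
  have "scale_fn p N > 0" using scale_fn_pos[OF p] N by simp
  moreover have "exit_prob p N 0 (\<lambda>w. w = 0) 0 = 1" by (simp add: exit_prob_certain exit_via_target)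
  moreover have "exit_prob p N 0 (\<lambda>w. w = 0) (int N) = 0"
    using N by (intro exit_prob_impossible not_exit_via_outside) auto
  ultimately show ?thesis
    using exit_prob_interpolation[OF p, of 0 "int N" N "\<lambda>w. w = 0" 0 z] N z by (simp add: field_simps)
qed

lemma prob_exit_at_N:
  assumes p: "1/2 \<le> p" "p < 1" and N: "N \<ge> 1" and z: "0 \<le> z" "z \<le> int N"
  shows "exit_prob p N (int N) (\<lambda>w. w = int N) z = scale_fn p z / scale_fn p N"
proof -
  have "exit_prob p N (int N) (\<lambda>w. w = int N) (int N) = 1"
    by (simp add: exit_prob_certain exit_via_target)
  moreover have "exit_prob p N (int N) (\<lambda>w. w = int N) 0 = 0"
    using N by (intro exit_prob_impossible not_exit_via_outside) auto
  ultimately show ?thesis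
    using exit_prob_interpolation[OF p, of 0 "int N" N "\<lambda>w. w = int N" "int N" z] N z by simp
qed

text \<open>The walk first climbs to level \<open>y\<close> and then exits at \<open>0\<close>: below \<open>y\<close> this probability
  is harmonic, it vanishes at \<open>0\<close>, and from \<open>y\<close> on it is the ruin probability.\<close>

lemma prob_climb_then_exit_at_0:
  assumes p: "1/2 \<le> p" "p < 1" and N: "N \<ge> 1" and y: "1 \<le> y" "y < int N" and z: "0 \<le> z" "z \<le> y"
  shows "exit_prob p N 0 (\<lambda>w. w \<ge> y) z
           = (scale_fn p N - scale_fn p y) / scale_fn p N * scale_fn p z / scale_fn p y"
proof -
  have "scale_fn p y > 0" using scale_fn_pos[OF p] y by simp
  moreover have "exit_prob p N 0 (\<lambda>w. w \<ge> y) y = (scale_fn p N - scale_fn p y) / scale_fn p N"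
    using prob_exit_at_0[OF p N, of y] y
    by (simp add: exit_prob_cong[OF exit_via_visited[of "\<lambda>w. w \<ge> y"]])
  moreover have "exit_prob p N 0 (\<lambda>w. w \<ge> y) 0 = 0"
    using y by (intro exit_prob_impossible not_exit_via_outside) auto
  ultimately show ?thesis
    using exit_prob_interpolation[OF p, of 0 y N "\<lambda>w. w \<ge> y" 0 z] y z by simp
qed

lemma prob_descend_then_exit_at_N:
  assumes p: "1/2 \<le> p" "p < 1" and N: "N \<ge> 1" and y: "1 \<le> y" "y < int N" and z: "y \<le> z" "z \<le> int N"
  shows "exit_prob p N (int N) (\<lambda>w. w \<le> y) z
           = scale_fn p y / scale_fn p N * (scale_fn p N - scale_fn p z) / (scale_fn p N - scale_fn p y)"
proof -
  define V where "V = scale_fn p y / scale_fn p N"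
  have D: "scale_fn p N - scale_fn p y > 0" using scale_fn_strict_mono[OF p, of y "int N"] y by simp
  have "exit_prob p N (int N) (\<lambda>w. w \<le> y) y = V"
    using prob_exit_at_N[OF p N, of y] y
    by (simp add: V_def exit_prob_cong[OF exit_via_visited[of "\<lambda>w. w \<le> y"]])
  moreover have "exit_prob p N (int N) (\<lambda>w. w \<le> y) (int N) = 0"
    using y by (intro exit_prob_impossible not_exit_via_outside) auto
  ultimately have "exit_prob p N (int N) (\<lambda>w. w \<le> y) z
      = V + (0 - V) * (scale_fn p z - scale_fn p y) / (scale_fn p N - scale_fn p y)"
    using exit_prob_interpolation[OF p, of y "int N" N "\<lambda>w. w \<le> y" "int N" z] y z by simp
  also have "\<dots> = V * (scale_fn p N - scale_fn p z) / (scale_fn p N - scale_fn p y)"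
    using D by (simp add: field_simps)
  finally show ?thesis by (simp add: V_def)
qed

section \<open>The range in terms of exit events\<close>

lemma walk_hits_down:
  assumes "a \<le> b" "walk z \<omega> b \<le> v" "v \<le> walk z \<omega> a"
  shows "\<exists>k. a \<le> k \<and> k \<le> b \<and> walk z \<omega> k = v"
  using assms
proof (induction b)
  case (Suc b)
  show ?case
  proof (cases "a = Suc b")
    case False
    then have ab: "a \<le> b" using Suc.prems by simp
    show ?thesis
    proof (cases "walk z \<omega> b \<le> v")
      case True
      then show ?thesis using Suc.IH[OF ab True Suc.prems(3)] le_Suc_eq by blast
    next
      case False
      have "walk z \<omega> (Suc b) = walk z \<omega> b + 1 \<or> walk z \<omega> (Suc b) = walk z \<omega> b - 1"
        by (simp add: walk_Suc step_of_def)
      then have "walk z \<omega> (Suc b) = v" using False Suc.prems(2,3) by linarith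
      then show ?thesis using ab by (intro exI[of _ "Suc b"]) auto
    qed
  qed (use Suc.prems in auto)
qed (auto intro: exI[of _ 0])

lemma first_exit_unique:
  assumes "walk z \<omega> n \<le> 0 \<or> walk z \<omega> n \<ge> int N" "\<forall>k<n. 0 < walk z \<omega> k \<and> walk z \<omega> k < int N"
    "walk z \<omega> n' \<le> 0 \<or> walk z \<omega> n' \<ge> int N" "\<forall>k<n'. 0 < walk z \<omega> k \<and> walk z \<omega> k < int N"
  shows "n = n'"
  using assms by (metis linorder_neqE_nat not_le)

lemma exit_via_time:
  assumes "exit_via N t Q z \<omega>" "t = 0 \<or> t = int N"
    "walk z \<omega> n \<le> 0 \<or> walk z \<omega> n \<ge> int N" "\<forall>k<n. 0 < walk z \<omega> k \<and> walk z \<omega> k < int N"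
  shows "walk z \<omega> n = t \<and> (\<exists>k\<le>n. Q (walk z \<omega> k))"
proof -
  obtain n' where n': "walk z \<omega> n' = t" "\<forall>k<n'. 0 < walk z \<omega> k \<and> walk z \<omega> k < int N"
    "\<exists>k\<le>n'. Q (walk z \<omega> k)"
    using assms(1) unfolding exit_via_def by blast
  have "n' = n" by (rule first_exit_unique[of z \<omega> n' N n]) (use n' assms in auto)
  then show ?thesis using n' by simp
qed

lemma not_exits_at_both:
  assumes "N \<ge> 1" shows "\<not> (exits_at N 0 z \<omega> \<and> exits_at N (int N) z \<omega>)"
proof
  assume both: "exits_at N 0 z \<omega> \<and> exits_at N (int N) z \<omega>"
  then obtain n where n: "walk z \<omega> n = 0" "\<forall>k<n. 0 < walk z \<omega> k \<and> walk z \<omega> k < int N"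
    unfolding exit_via_def by blast
  from exit_via_time[OF conjunct2[OF both] _ _ n(2)] n(1) assms show False by simp
qed

lemma walk_inside_before:
  assumes "0 < z" "z < int N" "\<forall>k. 1 \<le> k \<and> k < n \<longrightarrow> \<not> (walk z \<omega> k = 0 \<or> walk z \<omega> k = int N)"
  shows "k < n \<Longrightarrow> 0 < walk z \<omega> k \<and> walk z \<omega> k < int N"
proof (induction k)
  case (Suc k)
  then have "0 < walk z \<omega> k \<and> walk z \<omega> k < int N" by simp
  moreover have "\<not> (walk z \<omega> (Suc k) = 0 \<or> walk z \<omega> (Suc k) = int N)" using assms(3) Suc.prems by auto
  moreover have "walk z \<omega> (Suc k) = walk z \<omega> k + 1 \<or> walk z \<omega> (Suc k) = walk z \<omega> k - 1"
    by (simp add: walk_Suc step_of_def)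
  ultimately show ?case by linarith
qed (use assms in simp)

text \<open>The exit time \<open>min(T_0, T_N)\<close> of the statement is the exit time of the events above;
  if the walk never exits, it is the (irrelevant) value of the empty \<open>LEAST\<close>.\<close>

definition exit_time_never :: nat where
  "exit_time_never = (LEAST n::nat. False)"

lemma exit_time_no_exit:
  assumes "0 < x" "x < N" "\<not> exits_at N 0 (int x) \<omega>" "\<not> exits_at N (int N) (int x) \<omega>"
  shows "exit_time N x \<omega> = exit_time_never"
proof -
  have "\<not> (n \<ge> 1 \<and> (walk (int x) \<omega> n = 0 \<or> walk (int x) \<omega> n = int N))" for n
  proof
    define P where "P n \<longleftrightarrow> n \<ge> 1 \<and> (walk (int x) \<omega> n = 0 \<or> walk (int x) \<omega> n = int N)" for n
    define l where "l = (LEAST n. P n)"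
    assume "n \<ge> 1 \<and> (walk (int x) \<omega> n = 0 \<or> walk (int x) \<omega> n = int N)"
    then have "P n" by (simp add: P_def)
    then have first: "P l" unfolding l_def by (rule LeastI)
    have "\<forall>k. 1 \<le> k \<and> k < l \<longrightarrow> \<not> (walk (int x) \<omega> k = 0 \<or> walk (int x) \<omega> k = int N)"
      using not_less_Least[of _ P] unfolding P_def l_def by blast
    then have "\<forall>k < l. 0 < walk (int x) \<omega> k \<and> walk (int x) \<omega> k < int N"
      using walk_inside_before assms(1,2) by auto
    then have "exits_at N (walk (int x) \<omega> l) (int x) \<omega>"
      unfolding exit_via_def by (intro exI[of _ l]) auto
    then show False using first assms(3,4) unfolding P_def by auto
  qed
  then have "(\<lambda>n. n \<ge> 1 \<and> (walk_pos x \<omega> n = 0 \<or> walk_pos x \<omega> n = int N)) = (\<lambda>n. False)"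
    by (auto simp: walk_pos_eq_walk)
  then show ?thesis unfolding exit_time_def exit_time_never_def by simp
qed

lemma exit_time_eq:
  assumes "0 < x" "x < N" "walk (int x) \<omega> n = t" "t = 0 \<or> t = int N"
    "\<forall>k<n. 0 < walk (int x) \<omega> k \<and> walk (int x) \<omega> k < int N"
  shows "exit_time N x \<omega> = n"
  unfolding exit_time_def walk_pos_eq_walk
proof (rule Least_equality)
  have "n \<noteq> 0" using assms(1-4) by (cases n) auto
  then show "1 \<le> n \<and> (walk (int x) \<omega> n = 0 \<or> walk (int x) \<omega> n = int N)" using assms by auto
  show "n \<le> m" if "1 \<le> m \<and> (walk (int x) \<omega> m = 0 \<or> walk (int x) \<omega> m = int N)" for m
    using that assms(5) by (metis leI less_irrefl)
qed

text \<open>Counting visited sites: a path from \<open>z\<close> that stays inside until it exits at \<open>0\<close>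
  at time \<open>n\<close> visits exactly the sites \<open>0, \<dots>, M\<close> where \<open>M\<close> is its maximum, so it visits
  at least \<open>m\<close> sites iff it reaches \<open>m - 1\<close>.\<close>

lemma card_visited_exit_at_0:
  assumes z: "0 < z" and n: "walk z \<omega> n = 0" "\<forall>k<n. 0 < walk z \<omega> k \<and> walk z \<omega> k < int N"
  shows "m \<le> int (card ({0..int N} \<inter> {walk z \<omega> k | k. k \<le> n})) \<longleftrightarrow> (\<exists>k\<le>n. walk z \<omega> k \<ge> m - 1)"
    (is "_ \<longleftrightarrow> ?reach")
proof -
  define V where "V = {0..int N} \<inter> {walk z \<omega> k | k. k \<le> n}"
  have bounded: "0 \<le> walk z \<omega> k \<and> walk z \<omega> k \<le> int N" if "k \<le> n" for k
    using n that by (cases "k = n") (auto simp: le_less)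
  show ?thesis unfolding V_def[symmetric]
  proof
    assume ?reach
    then obtain k0 where k0: "k0 \<le> n" "walk z \<omega> k0 \<ge> m - 1" by blast
    have "{0..m - 1} \<subseteq> V"
    proof
      fix v assume v: "v \<in> {0..m - 1}"
      obtain k where "k0 \<le> k" "k \<le> n" "walk z \<omega> k = v"
        using walk_hits_down[of k0 n z \<omega> v] k0 v n by auto
      then show "v \<in> V" unfolding V_def using bounded[of k] by auto
    qed
    then have "card {0..m - 1} \<le> card V" by (intro card_mono) (simp_all add: V_def)
    then show "m \<le> int (card V)" by (cases "m \<le> 0") auto
  next
    assume m: "m \<le> int (card V)"
    show ?reach
    proof (rule ccontr)
      assume "\<not> ?reach"
      then have below: "\<forall>k\<le>n. walk z \<omega> k < m - 1" by (meson not_le)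
      have "V \<subseteq> {0..m - 2}" unfolding V_def using below by fastforce
      then have "card V \<le> card {0..m - 2}" by (intro card_mono) simp_all
      moreover have "m \<ge> 1" using below[rule_format, of 0] z by simp
      ultimately show False using m by simp
    qed
  qed
qed

text \<open>The case of an exit at \<open>N\<close> follows by reflecting the path at \<open>N/2\<close>.\<close>

lemma card_visited_exit_at_N:
  assumes z: "z < int N" and n: "walk z \<omega> n = int N" "\<forall>k<n. 0 < walk z \<omega> k \<and> walk z \<omega> k < int N"
  shows "m \<le> int (card ({0..int N} \<inter> {walk z \<omega> k | k. k \<le> n}))
           \<longleftrightarrow> (\<exists>k\<le>n. walk z \<omega> k \<le> int N - m + 1)"
proof -
  define \<omega>' where "\<omega>' = smap Not \<omega>"
  have mirror: "walk (int N - z) \<omega>' k = int N - walk z \<omega> k" for k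
    unfolding \<omega>'_def by (rule walk_mirror)
  have "{0..int N} \<inter> {walk (int N - z) \<omega>' k | k. k \<le> n}
      = (\<lambda>v. int N - v) ` ({0..int N} \<inter> {walk z \<omega> k | k. k \<le> n})"
    unfolding mirror by (auto simp: image_iff)
  moreover have "inj_on (\<lambda>v. int N - v) A" for A by (simp add: inj_on_def)
  ultimately have "card ({0..int N} \<inter> {walk (int N - z) \<omega>' k | k. k \<le> n})
      = card ({0..int N} \<inter> {walk z \<omega> k | k. k \<le> n})"
    by (simp add: card_image)
  moreover have "m \<le> int (card ({0..int N} \<inter> {walk (int N - z) \<omega>' k | k. k \<le> n}))
      \<longleftrightarrow> (\<exists>k\<le>n. walk (int N - z) \<omega>' k \<ge> m - 1)"
    using z n by (intro card_visited_exit_at_0) (auto simp: mirror)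
  moreover have "m - 1 \<le> int N - w \<longleftrightarrow> w \<le> int N - m + 1" for w by arith
  ultimately show ?thesis by (simp add: mirror)
qed


lemma range_walk_eq:
  "range_walk N x \<omega> = card ({0..int N} \<inter> {walk (int x) \<omega> k | k. k \<le> exit_time N x \<omega>})"
  unfolding range_walk_def walk_pos_eq_walk ..

lemma range_ge_exit_at_0:
  assumes x: "0 < x" "x < N" and exit: "exits_at N 0 (int x) \<omega>"
  shows "m \<le> int (range_walk N x \<omega>) \<longleftrightarrow> exit_via N 0 (\<lambda>w. w \<ge> m - 1) (int x) \<omega>"
proof -
  obtain n where n: "walk (int x) \<omega> n = 0" "\<forall>k<n. 0 < walk (int x) \<omega> k \<and> walk (int x) \<omega> k < int N"
    using exit unfolding exit_via_def by blast
  have "exit_time N x \<omega> = n" by (rule exit_time_eq[OF x n(1) _ n(2)]) simp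
  then have "m \<le> int (range_walk N x \<omega>) \<longleftrightarrow> (\<exists>k\<le>n. walk (int x) \<omega> k \<ge> m - 1)"
    using card_visited_exit_at_0[of "int x" \<omega> n N m] x n by (simp add: range_walk_eq)
  also have "\<dots> \<longleftrightarrow> exit_via N 0 (\<lambda>w. w \<ge> m - 1) (int x) \<omega>"
  proof
    assume "\<exists>k\<le>n. walk (int x) \<omega> k \<ge> m - 1"
    then show "exit_via N 0 (\<lambda>w. w \<ge> m - 1) (int x) \<omega>" using n unfolding exit_via_def by blast
  next
    assume "exit_via N 0 (\<lambda>w. w \<ge> m - 1) (int x) \<omega>"
    from exit_via_time[OF this _ _ n(2)] n(1) show "\<exists>k\<le>n. walk (int x) \<omega> k \<ge> m - 1" by simp
  qed
  finally show ?thesis .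
qed

lemma range_ge_exit_at_N:
  assumes x: "0 < x" "x < N" and exit: "exits_at N (int N) (int x) \<omega>"
  shows "m \<le> int (range_walk N x \<omega>) \<longleftrightarrow> exit_via N (int N) (\<lambda>w. w \<le> int N - m + 1) (int x) \<omega>"
proof -
  obtain n where n: "walk (int x) \<omega> n = int N"
      "\<forall>k<n. 0 < walk (int x) \<omega> k \<and> walk (int x) \<omega> k < int N"
    using exit unfolding exit_via_def by blast
  have "exit_time N x \<omega> = n" by (rule exit_time_eq[OF x n(1) _ n(2)]) simp
  then have "m \<le> int (range_walk N x \<omega>) \<longleftrightarrow> (\<exists>k\<le>n. walk (int x) \<omega> k \<le> int N - m + 1)"
    using card_visited_exit_at_N[of "int x" N \<omega> n m] x n by (simp add: range_walk_eq)
  also have "\<dots> \<longleftrightarrow> exit_via N (int N) (\<lambda>w. w \<le> int N - m + 1) (int x) \<omega>"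
  proof
    assume "\<exists>k\<le>n. walk (int x) \<omega> k \<le> int N - m + 1"
    then show "exit_via N (int N) (\<lambda>w. w \<le> int N - m + 1) (int x) \<omega>"
      using n unfolding exit_via_def by blast
  next
    assume "exit_via N (int N) (\<lambda>w. w \<le> int N - m + 1) (int x) \<omega>"
    from exit_via_time[OF this _ _ n(2)] n(1)
    show "\<exists>k\<le>n. walk (int x) \<omega> k \<le> int N - m + 1" by simp
  qed
  finally show ?thesis .
qed

text \<open>The event \<open>{R_N \<ge> m}\<close> decomposed along the exit point; the third part, on which
  the walk never exits, will turn out to be a null set.\<close>

lemma range_ge_iff:
  assumes x: "0 < x" "x < N"
  shows "m \<le> int (range_walk N x \<omega>) \<longleftrightarrow>
    exit_via N 0 (\<lambda>w. w \<ge> m - 1) (int x) \<omega> \<or> exit_via N (int N) (\<lambda>w. w \<le> int N - m + 1) (int x) \<omega> \<or>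
    (\<not> exits_at N 0 (int x) \<omega> \<and> \<not> exits_at N (int N) (int x) \<omega> \<and>
     m \<le> int (card ({0..int N} \<inter> {walk (int x) \<omega> k | k. k \<le> exit_time_never})))"
proof -
  have N: "N \<ge> 1" using x by simp
  consider "exits_at N 0 (int x) \<omega>" | "exits_at N (int N) (int x) \<omega>"
    | "\<not> exits_at N 0 (int x) \<omega>" "\<not> exits_at N (int N) (int x) \<omega>"
    by blast
  then show ?thesis
  proof cases
    case 1
    then show ?thesis using range_ge_exit_at_0[OF x 1] not_exits_at_both[OF N] exit_via_exits_at by blast
  next
    case 2
    then show ?thesis using range_ge_exit_at_N[OF x 2] not_exits_at_both[OF N] exit_via_exits_at by blast
  next
    case 3
    then show ?thesis using exit_time_no_exit[OF x 3] exit_via_exits_at by (auto simp: range_walk_eq)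
  qed
qed

lemma visited_stake:
  "{walk z \<omega> k | k. k \<le> n} = {z + (\<Sum>i<k. step_of (stake n \<omega> ! i)) | k. k \<le> n}"
  by (intro Collect_cong ex_cong1) (auto simp: walk_def sum_stake)

lemma range_ge_event:
  assumes "0 < x" "x < N"
  shows "{\<omega> \<in> space (path_space p). m \<le> int (range_walk N x \<omega>)} =
    {\<omega> \<in> space (path_space p). exit_via N 0 (\<lambda>w. w \<ge> m - 1) (int x) \<omega>} \<union>
    {\<omega> \<in> space (path_space p). exit_via N (int N) (\<lambda>w. w \<le> int N - m + 1) (int x) \<omega>} \<union>
    {\<omega> \<in> space (path_space p). \<not> exits_at N 0 (int x) \<omega> \<and> \<not> exits_at N (int N) (int x) \<omega> \<and>
       m \<le> int (card ({0..int N} \<inter>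
         {int x + (\<Sum>i<k. step_of (stake exit_time_never \<omega> ! i)) | k. k \<le> exit_time_never}))}"
  using range_ge_iff[OF assms, of m] unfolding visited_stake by blast

lemma range_ge_measurable:
  assumes "0 < x" "x < N"
  shows "{\<omega> \<in> space (path_space p). m \<le> int (range_walk N x \<omega>)} \<in> sets (path_space p)"
  by (subst range_ge_event[OF assms]) (unfold path_space_def, measurable)

definition range_ge_prob :: "real \<Rightarrow> nat \<Rightarrow> nat \<Rightarrow> int \<Rightarrow> real" where
  "range_ge_prob p N x m = measure (path_space p) {\<omega> \<in> space (path_space p). m \<le> int (range_walk N x \<omega>)}"

text \<open>The walk exits almost surely (the two ruin probabilities add up to one), so
  \<open>P(R_N \<ge> m)\<close> is the sum of the two exit probabilities.\<close>

lemma prob_range_ge: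
  assumes p: "1/2 \<le> p" "p < 1" and x: "0 < x" "x < N"
  shows "range_ge_prob p N x m =
    exit_prob p N 0 (\<lambda>w. w \<ge> m - 1) (int x) + exit_prob p N (int N) (\<lambda>w. w \<le> int N - m + 1) (int x)"
proof -
  interpret S: prob_space "path_space p" by (rule prob_space_path_space)
  have N: "N \<ge> 1" using x by simp
  define A where "A = {\<omega> \<in> space (path_space p). exit_via N 0 (\<lambda>w. w \<ge> m - 1) (int x) \<omega>}"
  define B where "B = {\<omega> \<in> space (path_space p). exit_via N (int N) (\<lambda>w. w \<le> int N - m + 1) (int x) \<omega>}"
  define C where "C = {\<omega> \<in> space (path_space p). \<not> exits_at N 0 (int x) \<omega> \<and> \<not> exits_at N (int N) (int x) \<omega> \<and>
       m \<le> int (card ({0..int N} \<inter>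
         {int x + (\<Sum>i<k. step_of (stake exit_time_never \<omega> ! i)) | k. k \<le> exit_time_never}))}"
  define E0 where "E0 = {\<omega> \<in> space (path_space p). exits_at N 0 (int x) \<omega>}"
  define EN where "EN = {\<omega> \<in> space (path_space p). exits_at N (int N) (int x) \<omega>}"
  have sets: "A \<in> S.events" "B \<in> S.events" "C \<in> S.events" "E0 \<in> S.events" "EN \<in> S.events"
    unfolding A_def B_def C_def E0_def EN_def path_space_def by measurable
  have disjoint: "E0 \<inter> EN = {}" using not_exits_at_both[OF N] unfolding E0_def EN_def by blast
  have "S.prob (E0 \<union> EN) = S.prob E0 + S.prob EN" using sets disjoint by (intro S.finite_measure_Union) auto
  also have "\<dots> = (scale_fn p N - scale_fn p x) / scale_fn p N + scale_fn p x / scale_fn p N"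
    using prob_exit_at_0[OF p N, of "int x"] prob_exit_at_N[OF p N, of "int x"] x
    unfolding exit_prob_def E0_def EN_def by simp
  also have "\<dots> = 1" using scale_fn_pos[OF p, of "int N"] N by (simp add: field_simps)
  finally have "S.prob (space (path_space p) - (E0 \<union> EN)) = 0" using sets by (subst S.prob_compl) auto
  then have "space (path_space p) - (E0 \<union> EN) \<in> null_sets (path_space p)"
    using sets by (simp add: S.emeasure_eq_measure null_sets_def)
  moreover have "C \<subseteq> space (path_space p) - (E0 \<union> EN)" unfolding C_def E0_def EN_def by blast
  ultimately have C_null: "C \<in> null_sets (path_space p)" using null_sets_subset sets(3) by blast
  have "range_ge_prob p N x m = S.prob (A \<union> B \<union> C)"
    unfolding range_ge_prob_def range_ge_event[OF x] A_def B_def C_def ..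
  also have "\<dots> = S.prob (A \<union> B)" using sets C_null by (intro measure_Un_null_set) auto
  also have "\<dots> = S.prob A + S.prob B"
    using sets disjoint exit_via_exits_at by (intro S.finite_measure_Union) (auto simp: A_def B_def E0_def EN_def)
  finally show ?thesis unfolding A_def B_def exit_prob_def .
qed


section \<open>The exact law of the range\<close>

text \<open>The tail of the range as a function of the scale-function values at the start
  point \<open>A\<close>, the highest and lowest levels \<open>B\<close> and \<open>C\<close> the walk must reach, and at \<open>N\<close>:
  climb to \<open>B\<close> then exit at \<open>0\<close>, or descend to \<open>C\<close> then exit at \<open>N\<close>.\<close>

definition tail_formula :: "real \<Rightarrow> real \<Rightarrow> real \<Rightarrow> real \<Rightarrow> real" where
  "tail_formula A B C E = (E - B) / E * A / B + C / E * (E - A) / (E - C)"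

lemma prob_range_ge_formula:
  assumes p: "1/2 \<le> p" "p < 1" and x: "0 < x" "x < N" and m: "m \<le> int N"
  shows "range_ge_prob p N x m =
    tail_formula (scale_fn p x) (scale_fn p (max (int x) (m - 1))) (scale_fn p (min (int x) (int N - m + 1)))
      (scale_fn p N)"
proof -
  have N: "N \<ge> 1" using x by simp
  define high where "high = max (int x) (m - 1)"
  define low where "low = min (int x) (int N - m + 1)"
  have "exit_prob p N 0 (\<lambda>w. w \<ge> m - 1) (int x) = exit_prob p N 0 (\<lambda>w. w \<ge> high) (int x)"
  proof (cases "m - 1 \<le> int x")
    case True
    then show ?thesis unfolding high_def by (intro exit_prob_cong) (simp add: exit_via_visited)
  qed (simp add: high_def max_def)
  also have "\<dots> = (scale_fn p N - scale_fn p high) / scale_fn p N * scale_fn p x / scale_fn p high"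
    by (rule prob_climb_then_exit_at_0[OF p N]) (use x m in \<open>auto simp: high_def\<close>)
  finally have climb: "exit_prob p N 0 (\<lambda>w. w \<ge> m - 1) (int x)
      = (scale_fn p N - scale_fn p high) / scale_fn p N * scale_fn p x / scale_fn p high" .
  have "exit_prob p N (int N) (\<lambda>w. w \<le> int N - m + 1) (int x) = exit_prob p N (int N) (\<lambda>w. w \<le> low) (int x)"
  proof (cases "int N - m + 1 \<ge> int x")
    case True
    then show ?thesis unfolding low_def by (intro exit_prob_cong) (simp add: exit_via_visited)
  qed (simp add: low_def min_def)
  also have "\<dots> = scale_fn p low / scale_fn p N * (scale_fn p N - scale_fn p x) / (scale_fn p N - scale_fn p low)"
    by (rule prob_descend_then_exit_at_N[OF p N]) (use x m in \<open>auto simp: low_def\<close>)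
  finally have descend: "exit_prob p N (int N) (\<lambda>w. w \<le> int N - m + 1) (int x)
      = scale_fn p low / scale_fn p N * (scale_fn p N - scale_fn p x) / (scale_fn p N - scale_fn p low)" .
  show ?thesis unfolding prob_range_ge[OF p x] climb descend tail_formula_def
      high_def[symmetric] low_def[symmetric]
    by (simp add: mult.assoc)
qed

text \<open>The formula only depends on ratios of scale-function values, which is what makes
  the scaling limit possible.\<close>

lemma tail_formula_scale:
  assumes "K > 0" shows "tail_formula (A / K) (B / K) (C / K) (E / K) = tail_formula A B C E"
proof -
  have ratios: "(E / K - B / K) / (E / K) = (E - B) / E" "(A / K) / (B / K) = A / B" "(C / K) / (E / K) = C / E"
      "(E / K - A / K) / (E / K - C / K) = (E - A) / (E - C)"
    using assms by (simp_all add: diff_divide_distrib[symmetric])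
  have "tail_formula (A / K) (B / K) (C / K) (E / K)
      = (E / K - B / K) / (E / K) * ((A / K) / (B / K)) + (C / K) / (E / K) * ((E / K - A / K) / (E / K - C / K))"
    unfolding tail_formula_def by (simp add: mult.assoc)
  also have "\<dots> = tail_formula A B C E" unfolding ratios tail_formula_def by (simp add: mult.assoc)
  finally show ?thesis .
qed

lemma tendsto_tail_formula:
  assumes "(a \<longlongrightarrow> A) F" "(b \<longlongrightarrow> B) F" "(c \<longlongrightarrow> C) F" "(e \<longlongrightarrow> E) F" "B \<noteq> 0" "E \<noteq> 0" "E - C \<noteq> 0"
  shows "((\<lambda>n. tail_formula (a n) (b n) (c n) (e n)) \<longlongrightarrow> tail_formula A B C E) F"
  unfolding tail_formula_def using assms by (intro tendsto_intros) auto

section \<open>The scaling limit of the tail\<close>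

lemma of_int_max_divide:
  "(N::real) > 0 \<Longrightarrow> real_of_int (max a b) / N = max (real_of_int a / N) (real_of_int b / N)"
  by (auto simp: max_def divide_le_cancel)

lemma of_int_min_divide:
  "(N::real) > 0 \<Longrightarrow> real_of_int (min a b) / N = min (real_of_int a / N) (real_of_int b / N)"
  by (auto simp: min_def divide_le_cancel)

lemma ratio_self: "(\<lambda>N. real N / real N) \<longlonglongrightarrow> 1"
  by (rule Lim_transform_eventually[OF tendsto_const]) (use eventually_gt_at_top[of 0] in \<open>eventually_elim, simp\<close>)

lemma climb_level_ratio:
  assumes "(\<lambda>N. real (x N) / real N) \<longlonglongrightarrow> \<alpha>" "(\<lambda>N. real_of_int (m N) / real N) \<longlonglongrightarrow> \<beta>"
  shows "(\<lambda>N. real_of_int (max (int (x N)) (m N - 1)) / real N) \<longlonglongrightarrow> max \<alpha> \<beta>"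
proof -
  have "(\<lambda>N. real_of_int (m N) / real N - 1 / real N) \<longlonglongrightarrow> \<beta> - 0"
    by (intro tendsto_intros assms(2))
  then have "(\<lambda>N. max (real (x N) / real N) (real_of_int (m N - 1) / real N)) \<longlonglongrightarrow> max \<alpha> \<beta>"
    using assms(1) by (intro tendsto_intros) (simp_all add: diff_divide_distrib)
  then show ?thesis
    by (rule Lim_transform_eventually)
       (use eventually_gt_at_top[of 0] in \<open>eventually_elim, simp add: of_int_max_divide\<close>)
qed

lemma descend_level_ratio:
  assumes "(\<lambda>N. real (x N) / real N) \<longlonglongrightarrow> \<alpha>" "(\<lambda>N. real_of_int (m N) / real N) \<longlonglongrightarrow> \<beta>"
  shows "(\<lambda>N. real_of_int (min (int (x N)) (int N - m N + 1)) / real N) \<longlonglongrightarrow> min \<alpha> (1 - \<beta>)"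
proof -
  have "(\<lambda>N. real N / real N - real_of_int (m N) / real N + 1 / real N) \<longlonglongrightarrow> 1 - \<beta> + 0"
    by (intro tendsto_intros ratio_self assms(2))
  then have "(\<lambda>N. min (real (x N) / real N) (real_of_int (int N - m N + 1) / real N)) \<longlonglongrightarrow> min \<alpha> (1 - \<beta>)"
    using assms(1) by (intro tendsto_intros) (simp_all add: add_divide_distrib diff_divide_distrib)
  then show ?thesis
    by (rule Lim_transform_eventually)
       (use eventually_gt_at_top[of 0] in \<open>eventually_elim, simp add: of_int_min_divide\<close>)
qed


lemma floor_ratio: "(\<lambda>N. real_of_int \<lfloor>a * real N\<rfloor> / real N) \<longlonglongrightarrow> a"
proof (rule tendsto_sandwich)
  show "eventually (\<lambda>N. a - 1 / real N \<le> real_of_int \<lfloor>a * real N\<rfloor> / real N) sequentially"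
    using eventually_gt_at_top[of 0]
  proof eventually_elim
    case (elim N)
    have "(a * real N - 1) / real N \<le> real_of_int \<lfloor>a * real N\<rfloor> / real N"
      using elim by (intro divide_right_mono) linarith+
    moreover have "(a * real N - 1) / real N = a - 1 / real N" using elim by (simp add: field_simps)
    ultimately show ?case by simp
  qed
  show "eventually (\<lambda>N. real_of_int \<lfloor>a * real N\<rfloor> / real N \<le> a) sequentially"
    using eventually_gt_at_top[of 0]
  proof eventually_elim
    case (elim N)
    have "real_of_int \<lfloor>a * real N\<rfloor> \<le> a * real N" by linarith
    then show ?case using elim by (simp add: field_simps)
  qed
  have "(\<lambda>N. a - 1 / real N) \<longlonglongrightarrow> a - 0" by (intro tendsto_intros)
  then show "(\<lambda>N. a - 1 / real N) \<longlonglongrightarrow> a" by simp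
qed simp

lemma ceiling_ratio: "(\<lambda>N. real_of_int \<lceil>a * real N\<rceil> / real N) \<longlonglongrightarrow> a"
  using tendsto_minus[OF floor_ratio[of "- a"]] by (simp add: ceiling_def)

lemma floor_plus_one_ratio: "(\<lambda>N. real_of_int (\<lfloor>a * real N\<rfloor> + 1) / real N) \<longlonglongrightarrow> a"
proof -
  have "(\<lambda>N. real_of_int \<lfloor>a * real N\<rfloor> / real N + 1 / real N) \<longlonglongrightarrow> a + 0"
    by (intro tendsto_intros floor_ratio)
  then show ?thesis by (simp add: add_divide_distrib)
qed

lemma start_pt_ratio: "0 < \<alpha> \<Longrightarrow> (\<lambda>N. real (start_pt \<alpha> N) / real N) \<longlonglongrightarrow> \<alpha>"
  using floor_ratio[of \<alpha>] by (simp add: start_pt_def)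

lemma start_pt_inside:
  assumes "0 < \<alpha>" "\<alpha> < 1"
  shows "eventually (\<lambda>N. 0 < start_pt \<alpha> N \<and> start_pt \<alpha> N < N) sequentially"
  using eventually_ge_at_top[of "nat \<lceil>1 / \<alpha>\<rceil> + 1"]
proof eventually_elim
  case (elim N)
  then have "real N \<ge> 1 / \<alpha>" by linarith
  then have "\<alpha> * real N \<ge> 1" using assms by (simp add: field_simps)
  moreover have "\<alpha> * real N < real N" using assms elim by simp
  ultimately show ?case unfolding start_pt_def by linarith
qed

lemma range_ge_tendsto:
  fixes p K :: "nat \<Rightarrow> real" and x :: "nat \<Rightarrow> nat" and m :: "nat \<Rightarrow> int" and \<Phi> :: "real \<Rightarrow> real"
  assumes p: "eventually (\<lambda>N. 1/2 \<le> p N \<and> p N < 1) sequentially"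
    and K: "eventually (\<lambda>N. K N > 0) sequentially"
    and scaling: "\<And>z \<zeta>. (\<lambda>N. real_of_int (z N) / real N) \<longlonglongrightarrow> \<zeta> \<Longrightarrow> 0 \<le> \<zeta> \<Longrightarrow> \<zeta> \<le> 1 \<Longrightarrow>
       eventually (\<lambda>N. 0 \<le> z N) sequentially \<Longrightarrow> (\<lambda>N. scale_fn (p N) (z N) / K N) \<longlonglongrightarrow> \<Phi> \<zeta>"
    and x: "(\<lambda>N. real (x N) / real N) \<longlonglongrightarrow> \<alpha>" "eventually (\<lambda>N. 0 < x N \<and> x N < N) sequentially"
      "0 \<le> \<alpha>" "\<alpha> \<le> 1"
    and m: "(\<lambda>N. real_of_int (m N) / real N) \<longlonglongrightarrow> \<beta>" "eventually (\<lambda>N. m N \<le> int N) sequentially"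
      "0 \<le> \<beta>" "\<beta> \<le> 1"
    and nz: "\<Phi> (max \<alpha> \<beta>) \<noteq> 0" "\<Phi> 1 \<noteq> 0" "\<Phi> 1 - \<Phi> (min \<alpha> (1 - \<beta>)) \<noteq> 0"
  shows "(\<lambda>N. range_ge_prob (p N) N (x N) (m N))
     \<longlonglongrightarrow> tail_formula (\<Phi> \<alpha>) (\<Phi> (max \<alpha> \<beta>)) (\<Phi> (min \<alpha> (1 - \<beta>))) (\<Phi> 1)"
proof -
  define high where "high N = max (int (x N)) (m N - 1)" for N
  define low where "low N = min (int (x N)) (int N - m N + 1)" for N
  have start: "(\<lambda>N. scale_fn (p N) (int (x N)) / K N) \<longlonglongrightarrow> \<Phi> \<alpha>"
    using x by (intro scaling) (auto elim!: eventually_mono)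
  have climb: "(\<lambda>N. scale_fn (p N) (high N) / K N) \<longlonglongrightarrow> \<Phi> (max \<alpha> \<beta>)"
    using climb_level_ratio[OF x(1) m(1)] x(2-4) m(3,4)
    by (intro scaling) (auto simp: high_def elim!: eventually_mono)
  have "eventually (\<lambda>N. 0 \<le> low N) sequentially"
    using x(2) m(2) by eventually_elim (auto simp: low_def)
  then have descend: "(\<lambda>N. scale_fn (p N) (low N) / K N) \<longlonglongrightarrow> \<Phi> (min \<alpha> (1 - \<beta>))"
    using descend_level_ratio[OF x(1) m(1)] x(3,4) m(3,4) by (intro scaling) (auto simp: low_def)
  have boundary: "(\<lambda>N. scale_fn (p N) (int N) / K N) \<longlonglongrightarrow> \<Phi> 1"
    using ratio_self by (intro scaling) auto
  have "(\<lambda>N. tail_formula (scale_fn (p N) (int (x N)) / K N) (scale_fn (p N) (high N) / K N)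
        (scale_fn (p N) (low N) / K N) (scale_fn (p N) (int N) / K N))
      \<longlonglongrightarrow> tail_formula (\<Phi> \<alpha>) (\<Phi> (max \<alpha> \<beta>)) (\<Phi> (min \<alpha> (1 - \<beta>))) (\<Phi> 1)"
    by (rule tendsto_tail_formula[OF start climb descend boundary nz])
  moreover have "eventually (\<lambda>N. tail_formula (scale_fn (p N) (int (x N)) / K N) (scale_fn (p N) (high N) / K N)
        (scale_fn (p N) (low N) / K N) (scale_fn (p N) (int N) / K N) = range_ge_prob (p N) N (x N) (m N))
      sequentially"
    using p K x(2) m(2)
    by eventually_elim (simp add: tail_formula_scale prob_range_ge_formula high_def low_def)
  ultimately show ?thesis by (rule Lim_transform_eventually)
qed

lemma sym_range_ge_tendsto:
  assumes a: "0 < \<alpha>" "\<alpha> < 1" and m: "(\<lambda>N. real_of_int (m N) / real N) \<longlonglongrightarrow> \<beta>"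
    "eventually (\<lambda>N. m N \<le> int N) sequentially" "0 \<le> \<beta>" "\<beta> \<le> 1"
  shows "(\<lambda>N. range_ge_prob (1/2) N (start_pt \<alpha> N) (m N))
     \<longlonglongrightarrow> tail_formula \<alpha> (max \<alpha> \<beta>) (min \<alpha> (1 - \<beta>)) 1"
  using range_ge_tendsto[where p = "\<lambda>_. 1/2" and K = real and \<Phi> = id, OF _ _ _ start_pt_ratio start_pt_inside]
    a m by (auto simp: scale_fn_def)

text \<open>For \<open>p_N = 1/2 + c/N\<close> one has \<open>((1 - p_N)/p_N)^N \<rightarrow> e^{-4c}\<close>, so the scale function at
  level \<open>\<zeta> N\<close> converges to \<open>1 - e^{-4c\<zeta>}\<close> without normalisation.\<close>

definition exp_scale :: "real \<Rightarrow> real \<Rightarrow> real" where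
  "exp_scale c t = 1 - exp (- 4 * c * t)"

lemma exp_scale_strict_mono: "c > 0 \<Longrightarrow> s < t \<Longrightarrow> exp_scale c s < exp_scale c t"
  by (simp add: exp_scale_def)

lemma exp_scale_0 [simp]: "exp_scale c 0 = 0"
  by (simp add: exp_scale_def)

lemma weak_p_bounds:
  assumes "c > 0"
  shows "eventually (\<lambda>N. 1/2 \<le> 1/2 + c / real N \<and> 1/2 + c / real N < 1) sequentially"
  using eventually_ge_at_top[of "nat \<lceil>2 * c\<rceil> + 1"]
proof eventually_elim
  case (elim N)
  then have "real N > 2 * c" by linarith
  then have "c / real N < 1/2" using assms by (simp add: divide_less_eq)
  moreover have "c / real N \<ge> 0" using assms by simp
  ultimately show ?case by linarith
qed

lemma log_odds_limit:
  assumes "c > 0"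
  shows "(\<lambda>N. real N * ln ((1 - (1/2 + c / real N)) / (1/2 + c / real N))) \<longlonglongrightarrow> -4 * c"
proof -
  have "((\<lambda>t::real. t * ln ((1 - (1/2 + c / t)) / (1/2 + c / t))) \<longlongrightarrow> -4 * c) at_top"
    using assms by real_asymp
  then show ?thesis by (rule filterlim_compose) (rule filterlim_real_sequentially)
qed

lemma weak_scale_fn_tendsto:
  assumes c: "c > 0" and z: "(\<lambda>N. real_of_int (z N) / real N) \<longlonglongrightarrow> \<zeta>" "eventually (\<lambda>N. 0 \<le> z N) sequentially"
  shows "(\<lambda>N. scale_fn (1/2 + c / real N) (z N) / 1) \<longlonglongrightarrow> exp_scale c \<zeta>"
proof -
  define r where "r N = (1 - (1/2 + c / real N)) / (1/2 + c / real N)" for N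
  have "(\<lambda>N. 1 - exp ((real_of_int (z N) / real N) * (real N * ln (r N)))) \<longlonglongrightarrow> 1 - exp (\<zeta> * (-4 * c))"
    unfolding r_def by (intro tendsto_intros z(1) log_odds_limit c)
  moreover have "eventually (\<lambda>N. 1 - exp ((real_of_int (z N) / real N) * (real N * ln (r N)))
      = scale_fn (1/2 + c / real N) (z N) / 1) sequentially"
    using weak_p_bounds[OF c] z(2) eventually_gt_at_top[of 0]
  proof eventually_elim
    case (elim N)
    have "0 < c / real N" using elim c by simp
    moreover have "c / real N < 1/2" using elim by linarith
    ultimately have "r N > 0" unfolding r_def by (intro divide_pos_pos) linarith+
    then have "r N ^ nat (z N) = exp (real_of_int (z N) * ln (r N))"
      using elim by (simp add: powr_realpow[symmetric] powr_def)
    moreover have "1/2 + c / real N \<noteq> 1/2" using c elim by simp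
    ultimately show ?case using elim unfolding scale_fn_def r_def by simp
  qed
  ultimately show ?thesis by (simp add: exp_scale_def mult.commute Lim_transform_eventually)
qed

lemma weak_range_ge_tendsto:
  assumes a: "0 < \<alpha>" "\<alpha> < 1" and c: "c > 0" and m: "(\<lambda>N. real_of_int (m N) / real N) \<longlonglongrightarrow> \<beta>"
    "eventually (\<lambda>N. m N \<le> int N) sequentially" "0 \<le> \<beta>" "\<beta> \<le> 1"
  shows "(\<lambda>N. range_ge_prob (1/2 + c / real N) N (start_pt \<alpha> N) (m N))
     \<longlonglongrightarrow> tail_formula (exp_scale c \<alpha>) (exp_scale c (max \<alpha> \<beta>)) (exp_scale c (min \<alpha> (1 - \<beta>)))
           (exp_scale c 1)"
proof (rule range_ge_tendsto[where K = "\<lambda>_. 1", OF weak_p_bounds[OF c]])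
  show "(\<lambda>N. scale_fn (1/2 + c / real N) (z N) / 1) \<longlonglongrightarrow> exp_scale c \<zeta>"
    if "(\<lambda>N. real_of_int (z N) / real N) \<longlonglongrightarrow> \<zeta>" "eventually (\<lambda>N. 0 \<le> z N) sequentially" for z \<zeta>
    using weak_scale_fn_tendsto[OF c that] .
  show "exp_scale c (max \<alpha> \<beta>) \<noteq> 0" "exp_scale c 1 \<noteq> 0"
    using exp_scale_strict_mono[OF c, of 0 "max \<alpha> \<beta>"] exp_scale_strict_mono[OF c, of 0 1] a
    by (auto simp: less_max_iff_disj)
  show "exp_scale c 1 - exp_scale c (min \<alpha> (1 - \<beta>)) \<noteq> 0"
    using exp_scale_strict_mono[OF c, of "min \<alpha> (1 - \<beta>)" 1] a by (auto simp: min_less_iff_disj)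
qed (use a m start_pt_ratio start_pt_inside in auto)


section \<open>The limit law and its density\<close>

text \<open>The limiting tail \<open>\<beta> \<mapsto> lim P(R_N/N \<ge> \<beta>)\<close> for a limiting scale function \<open>\<Phi>\<close>, and
  its negative derivative (away from \<open>\<beta> = \<alpha>\<close> and \<open>\<beta> = 1 - \<alpha>\<close>), the limiting density.\<close>

definition limit_tail :: "(real \<Rightarrow> real) \<Rightarrow> real \<Rightarrow> real \<Rightarrow> real" where
  "limit_tail \<Phi> \<alpha> \<beta> = tail_formula (\<Phi> \<alpha>) (\<Phi> (max \<alpha> \<beta>)) (\<Phi> (min \<alpha> (1 - \<beta>))) (\<Phi> 1)"

definition limit_density :: "(real \<Rightarrow> real) \<Rightarrow> (real \<Rightarrow> real) \<Rightarrow> real \<Rightarrow> real \<Rightarrow> real" where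
  "limit_density \<Phi> \<Phi>' \<alpha> \<beta> = (if 0 < \<beta> \<and> \<beta> < 1 then
     (if \<alpha> < \<beta> then \<Phi> \<alpha> * \<Phi>' \<beta> / (\<Phi> \<beta>)\<^sup>2 else 0) +
     (if 1 - \<beta> < \<alpha> then (\<Phi> 1 - \<Phi> \<alpha>) * \<Phi>' (1 - \<beta>) / (\<Phi> 1 - \<Phi> (1 - \<beta>))\<^sup>2 else 0)
   else 0)"

lemma tail_formula_no_descent: "B \<noteq> 0 \<Longrightarrow> E \<noteq> 0 \<Longrightarrow> E \<noteq> A \<Longrightarrow> tail_formula A B A E = A / B"
  unfolding tail_formula_def by (simp add: field_simps)

lemma tail_formula_no_climb: "A \<noteq> 0 \<Longrightarrow> E \<noteq> 0 \<Longrightarrow> E \<noteq> C \<Longrightarrow> tail_formula A A C E = (E - A) / (E - C)"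
  unfolding tail_formula_def by (simp add: field_simps)

lemma limit_tail_cases:
  assumes "\<Phi> 1 \<noteq> 0" "\<Phi> 1 \<noteq> \<Phi> \<alpha>" "\<Phi> \<alpha> \<noteq> 0"
  shows "\<beta> \<le> \<alpha> \<Longrightarrow> \<alpha> \<le> 1 - \<beta> \<Longrightarrow> limit_tail \<Phi> \<alpha> \<beta> = 1"
    and "\<alpha> < \<beta> \<Longrightarrow> \<alpha> \<le> 1 - \<beta> \<Longrightarrow> \<Phi> \<beta> \<noteq> 0 \<Longrightarrow> limit_tail \<Phi> \<alpha> \<beta> = \<Phi> \<alpha> / \<Phi> \<beta>"
    and "\<beta> \<le> \<alpha> \<Longrightarrow> 1 - \<beta> < \<alpha> \<Longrightarrow> \<Phi> 1 \<noteq> \<Phi> (1 - \<beta>) \<Longrightarrow>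
         limit_tail \<Phi> \<alpha> \<beta> = (\<Phi> 1 - \<Phi> \<alpha>) / (\<Phi> 1 - \<Phi> (1 - \<beta>))"
    and "\<alpha> < \<beta> \<Longrightarrow> 1 - \<beta> < \<alpha> \<Longrightarrow> limit_tail \<Phi> \<alpha> \<beta> = tail_formula (\<Phi> \<alpha>) (\<Phi> \<beta>) (\<Phi> (1 - \<beta>)) (\<Phi> 1)"
  using assms tail_formula_no_descent[of "\<Phi> \<alpha>" "\<Phi> 1" "\<Phi> \<alpha>"]
  by (simp_all add: limit_tail_def max_def min_def tail_formula_no_descent tail_formula_no_climb)

lemma limit_tail_at_1: "0 < \<alpha> \<Longrightarrow> \<alpha> < 1 \<Longrightarrow> \<Phi> 0 = 0 \<Longrightarrow> limit_tail \<Phi> \<alpha> 1 = 0"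
  unfolding limit_tail_def tail_formula_def by (simp add: max_def min_def)

lemma limit_tail_sym:
  assumes a: "0 < \<alpha>" "\<alpha> < 1" and b: "0 \<le> \<beta>" "\<beta> \<le> 1"
  shows "limit_tail id \<alpha> \<beta> = tail_sym \<alpha> \<beta>"
proof -
  have nz: "id 1 \<noteq> (0::real)" "id 1 \<noteq> id \<alpha>" "id \<alpha> \<noteq> 0" using a by auto
  consider "\<beta> \<le> \<alpha>" "\<alpha> \<le> 1 - \<beta>" | "\<alpha> < \<beta>" "\<alpha> \<le> 1 - \<beta>" | "\<beta> \<le> \<alpha>" "1 - \<beta> < \<alpha>"
    | "\<alpha> < \<beta>" "1 - \<beta> < \<alpha>"
    by linarith
  then show ?thesis
  proof cases
    case 1
    have "limit_tail id \<alpha> \<beta> = 1" by (rule limit_tail_cases(1)[OF nz 1])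
    then show ?thesis using 1 unfolding tail_sym_def Let_def by auto
  next
    case 2
    have "limit_tail id \<alpha> \<beta> = id \<alpha> / id \<beta>" by (rule limit_tail_cases(2)[OF nz 2]) (use 2 a in auto)
    then have "limit_tail id \<alpha> \<beta> = \<alpha> / \<beta>" by simp
    then show ?thesis using 2 a unfolding tail_sym_def Let_def by (auto simp: min_def max_def)
  next
    case 3
    have "limit_tail id \<alpha> \<beta> = (id 1 - id \<alpha>) / (id 1 - id (1 - \<beta>))"
      by (rule limit_tail_cases(3)[OF nz 3]) (use 3 a in auto)
    then have "limit_tail id \<alpha> \<beta> = (1 - \<alpha>) / \<beta>" by simp
    then show ?thesis using 3 a b unfolding tail_sym_def Let_def by (auto simp: min_def max_def)
  next
    case 4
    have "limit_tail id \<alpha> \<beta> = tail_formula (id \<alpha>) (id \<beta>) (id (1 - \<beta>)) (id 1)"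
      by (rule limit_tail_cases(4)[OF nz 4])
    then have "limit_tail id \<alpha> \<beta> = tail_formula \<alpha> \<beta> (1 - \<beta>) 1" by simp
    also have "\<dots> = (1 - \<beta>) / \<beta>" unfolding tail_formula_def using 4 a b by (simp add: field_simps)
    finally show ?thesis using 4 a b unfolding tail_sym_def Let_def by (auto simp: min_def max_def)
  qed
qed

text \<open>Weakly asymmetric walk: in the variables \<open>u = e^{-4c\<alpha>}\<close>, \<open>v = e^{-4c\<beta>}\<close>,
  \<open>w = e^{-4c}\<close> the two-excursion case of the tail formula simplifies as follows.\<close>

lemma tail_formula_exp_scale:
  fixes u v w :: real
  assumes "w > 0" "v > 0" "v \<noteq> 1" "w \<noteq> 1"
  shows "tail_formula (1 - u) (1 - v) (1 - w / v) (1 - w) = u * (v / w - 1) / (1 - v)"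
proof -
  have nz: "1 - v \<noteq> 0" "1 - w \<noteq> 0" "(1 - w) - (1 - w / v) = w * (1 - v) / v"
    using assms by (auto simp: field_simps)
  have "tail_formula (1 - u) (1 - v) (1 - w / v) (1 - w)
     = (v - w) / (1 - w) * (1 - u) / (1 - v) + (1 - w / v) / (1 - w) * (u - w) / (w * (1 - v) / v)"
    unfolding tail_formula_def nz(3) by (simp add: algebra_simps)
  also have "\<dots> = u * (v / w - 1) / (1 - v)"
    using assms nz by (simp add: divide_simps) (simp add: algebra_simps)
  finally show ?thesis .
qed

lemma limit_tail_weak:
  assumes a: "0 < \<alpha>" "\<alpha> < 1" and c: "c > 0" and b: "0 \<le> \<beta>" "\<beta> \<le> 1"
  shows "limit_tail (exp_scale c) \<alpha> \<beta> = tail_weak c \<alpha> \<beta>"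
proof -
  define u v w where "u = exp (-4 * c * \<alpha>)" and "v = exp (-4 * c * \<beta>)" and "w = exp (-4 * c)"
  have pos: "exp_scale c t > 0" if "t > 0" for t using exp_scale_strict_mono[OF c that] by simp
  have nz: "exp_scale c 1 \<noteq> 0" "exp_scale c 1 \<noteq> exp_scale c \<alpha>" "exp_scale c \<alpha> \<noteq> 0"
    using pos[of 1] pos[of \<alpha>] exp_scale_strict_mono[OF c, of \<alpha> 1] a by auto
  have uvw: "w > 0" "v > 0" "w \<noteq> 1" unfolding v_def w_def using c by auto
  have reflected: "exp_scale c (1 - \<beta>) = 1 - w / v"
    unfolding exp_scale_def v_def w_def by (simp add: exp_diff[symmetric] algebra_simps)
  consider "\<beta> \<le> \<alpha>" "\<alpha> \<le> 1 - \<beta>" | "\<alpha> < \<beta>" "\<alpha> \<le> 1 - \<beta>" | "\<beta> \<le> \<alpha>" "1 - \<beta> < \<alpha>"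
    | "\<alpha> < \<beta>" "1 - \<beta> < \<alpha>"
    by linarith
  then show ?thesis
  proof cases
    case 1
    have "limit_tail (exp_scale c) \<alpha> \<beta> = 1" by (rule limit_tail_cases(1)[OF nz 1])
    then show ?thesis using 1 unfolding tail_weak_def Let_def by auto
  next
    case 2
    then have "limit_tail (exp_scale c) \<alpha> \<beta> = exp_scale c \<alpha> / exp_scale c \<beta>"
      using limit_tail_cases(2)[OF nz 2] pos[of \<beta>] a by simp
    then show ?thesis using 2 a unfolding tail_weak_def Let_def exp_scale_def by (auto simp: min_def max_def)
  next
    case 3
    then have v1: "v \<noteq> 1" unfolding v_def using a c by simp
    have "limit_tail (exp_scale c) \<alpha> \<beta> = (exp_scale c 1 - exp_scale c \<alpha>) / (exp_scale c 1 - exp_scale c (1 - \<beta>))"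
      using limit_tail_cases(3)[OF nz 3] exp_scale_strict_mono[OF c, of "1 - \<beta>" 1] 3 a by simp
    also have "\<dots> = (u - w) / (w / v - w)" unfolding reflected unfolding exp_scale_def u_def w_def by simp
    also have "\<dots> = (1 - u / w) / (1 - 1 / v)" using uvw v1 by (simp add: field_simps)
    also have "\<dots> = (1 - exp (4 * c * (1 - \<alpha>))) / (1 - exp (4 * c * \<beta>))"
      unfolding u_def v_def w_def by (simp add: exp_diff[symmetric] exp_minus inverse_eq_divide algebra_simps)
    finally show ?thesis using 3 a unfolding tail_weak_def Let_def by (auto simp: min_def max_def)
  next
    case 4
    then have v1: "v \<noteq> 1" unfolding v_def using a c by simp
    have "limit_tail (exp_scale c) \<alpha> \<beta> = tail_formula (1 - u) (1 - v) (1 - w / v) (1 - w)"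
      using limit_tail_cases(4)[OF nz 4] unfolding reflected unfolding exp_scale_def u_def v_def w_def by simp
    also have "\<dots> = u * (v / w - 1) / (1 - v)" by (rule tail_formula_exp_scale[OF uvw(1,2) v1 uvw(3)])
    also have "\<dots> = exp (-4 * c * \<alpha>) * (exp (4 * c * (1 - \<beta>)) - 1) / (1 - exp (-4 * c * \<beta>))"
      unfolding u_def v_def w_def by (simp add: exp_diff[symmetric] algebra_simps)
    finally show ?thesis using 4 a b unfolding tail_weak_def Let_def by (auto simp: min_def max_def)
  qed
qed




lemma climb_term_deriv:
  assumes "B \<noteq> 0" "E \<noteq> 0"
  shows "((\<lambda>b. (E - b) / E * A / b) has_real_derivative (- A / B\<^sup>2)) (at B)"
proof -
  have "((\<lambda>b. (E - b) / E * A / b) has_real_derivative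
      ((0 - 1) / E * A * B - (E - B) / E * A * 1) / (B * B)) (at B)"
    using assms by (intro derivative_eq_intros) auto
  then show ?thesis using assms by (simp add: field_simps power2_eq_square)
qed

lemma descend_term_deriv:
  assumes "E - C \<noteq> 0" "E \<noteq> 0"
  shows "((\<lambda>c. c / E * (E - A) / (E - c)) has_real_derivative ((E - A) / (E - C)\<^sup>2)) (at C)"
proof -
  have "((\<lambda>c. c / E * (E - A) / (E - c)) has_real_derivative
      ((1 / E * (E - A)) * (E - C) - C / E * (E - A) * (0 - 1)) / ((E - C) * (E - C))) (at C)"
    using assms by (intro derivative_eq_intros) auto
  moreover have "((1 / E * (E - A)) * (E - C) - C / E * (E - A) * (0 - 1)) / ((E - C) * (E - C))
      = (E - A) / (E - C)\<^sup>2"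
  proof -
    define D where "D = E - C"
    have C: "C = E - D" and "D \<noteq> 0" using assms by (simp_all add: D_def)
    then show ?thesis unfolding C using assms(2) by (simp add: field_simps power2_eq_square)
  qed
  ultimately show ?thesis by simp
qed

text \<open>The two levels \<open>max \<alpha> \<beta>\<close> and \<open>min \<alpha> (1 - \<beta>)\<close> are locally either constant or
  affine in \<open>\<beta>\<close>, except at the two kinks \<open>\<beta> = \<alpha>\<close>, \<open>\<beta> = 1 - \<alpha>\<close>.\<close>

lemma max_level_deriv:
  assumes \<Phi>: "\<And>t. (\<Phi> has_real_derivative \<Phi>' t) (at t)" and "\<beta> \<noteq> \<alpha>"
  shows "((\<lambda>t. \<Phi> (max \<alpha> t)) has_real_derivative (if \<alpha> < \<beta> then \<Phi>' \<beta> else 0)) (at \<beta>)"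
proof (cases "\<alpha> < \<beta>")
  case True
  have "((\<lambda>t. \<Phi> (max \<alpha> t)) has_real_derivative \<Phi>' \<beta>) (at \<beta>)"
    by (rule has_field_derivative_transform_within_open[OF \<Phi>, where S = "{\<alpha><..}"]) (use True in auto)
  then show ?thesis using True by simp
next
  case False
  have "((\<lambda>t. \<Phi> (max \<alpha> t)) has_real_derivative 0) (at \<beta>)"
    by (rule has_field_derivative_transform_within_open[OF DERIV_const, where S = "{..<\<alpha>}"])
       (use False assms(2) in auto)
  then show ?thesis using False by simp
qed

lemma min_level_deriv:
  assumes \<Phi>: "\<And>t. (\<Phi> has_real_derivative \<Phi>' t) (at t)" and "\<beta> \<noteq> 1 - \<alpha>"
  shows "((\<lambda>t. \<Phi> (min \<alpha> (1 - t))) has_real_derivative (if 1 - \<beta> < \<alpha> then - \<Phi>' (1 - \<beta>) else 0)) (at \<beta>)"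
proof (cases "1 - \<beta> < \<alpha>")
  case True
  have "((\<lambda>t. 1 - t) has_real_derivative - 1) (at \<beta>)" by (auto intro!: derivative_eq_intros)
  from DERIV_chain2[OF \<Phi> this]
  have "((\<lambda>t. \<Phi> (1 - t)) has_real_derivative \<Phi>' (1 - \<beta>) * (- 1)) (at \<beta>)" .
  then have "((\<lambda>t. \<Phi> (min \<alpha> (1 - t))) has_real_derivative \<Phi>' (1 - \<beta>) * (- 1)) (at \<beta>)"
    by (rule has_field_derivative_transform_within_open[where S = "{1 - \<alpha><..}"]) (use True in auto)
  then show ?thesis using True by simp
next
  case False
  have "((\<lambda>t. \<Phi> (min \<alpha> (1 - t))) has_real_derivative 0) (at \<beta>)"
    by (rule has_field_derivative_transform_within_open[OF DERIV_const, where S = "{..<1 - \<alpha>}"])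
       (use False assms(2) in auto)
  then show ?thesis using False by simp
qed

lemma limit_tail_deriv:
  assumes \<Phi>: "\<And>t. (\<Phi> has_real_derivative \<Phi>' t) (at t)"
    and b: "0 < \<beta>" "\<beta> < 1" "\<beta> \<noteq> \<alpha>" "\<beta> \<noteq> 1 - \<alpha>"
    and nz: "\<Phi> (max \<alpha> \<beta>) \<noteq> 0" "\<Phi> 1 \<noteq> 0" "\<Phi> 1 - \<Phi> (min \<alpha> (1 - \<beta>)) \<noteq> 0"
  shows "(limit_tail \<Phi> \<alpha> has_real_derivative - limit_density \<Phi> \<Phi>' \<alpha> \<beta>) (at \<beta>)"
proof -
  define A E where "A = \<Phi> \<alpha>" and "E = \<Phi> 1"
  have "((\<lambda>t. (E - \<Phi> (max \<alpha> t)) / E * A / \<Phi> (max \<alpha> t)) has_real_derivative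
      - A / (\<Phi> (max \<alpha> \<beta>))\<^sup>2 * (if \<alpha> < \<beta> then \<Phi>' \<beta> else 0)) (at \<beta>)"
    using nz by (intro DERIV_chain2[OF climb_term_deriv max_level_deriv[OF \<Phi> b(3)]]) (auto simp: E_def)
  moreover have "((\<lambda>t. \<Phi> (min \<alpha> (1 - t)) / E * (E - A) / (E - \<Phi> (min \<alpha> (1 - t)))) has_real_derivative
      (E - A) / (E - \<Phi> (min \<alpha> (1 - \<beta>)))\<^sup>2 * (if 1 - \<beta> < \<alpha> then - \<Phi>' (1 - \<beta>) else 0)) (at \<beta>)"
    using nz by (intro DERIV_chain2[OF descend_term_deriv min_level_deriv[OF \<Phi> b(4)]]) (auto simp: E_def)
  ultimately have "(limit_tail \<Phi> \<alpha> has_real_derivative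
      - A / (\<Phi> (max \<alpha> \<beta>))\<^sup>2 * (if \<alpha> < \<beta> then \<Phi>' \<beta> else 0)
      + (E - A) / (E - \<Phi> (min \<alpha> (1 - \<beta>)))\<^sup>2 * (if 1 - \<beta> < \<alpha> then - \<Phi>' (1 - \<beta>) else 0)) (at \<beta>)"
    unfolding limit_tail_def tail_formula_def A_def E_def by (rule DERIV_add)
  moreover have "- A / (\<Phi> (max \<alpha> \<beta>))\<^sup>2 * (if \<alpha> < \<beta> then \<Phi>' \<beta> else 0)
      + (E - A) / (E - \<Phi> (min \<alpha> (1 - \<beta>)))\<^sup>2 * (if 1 - \<beta> < \<alpha> then - \<Phi>' (1 - \<beta>) else 0)
      = - limit_density \<Phi> \<Phi>' \<alpha> \<beta>"
    using b nz by (auto simp: limit_density_def A_def E_def max_def min_def field_simps)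
  ultimately show ?thesis by simp
qed

text \<open>Fundamental theorem of calculus: for an increasing scale \<open>\<Phi>\<close> with \<open>\<Phi>(0) = 0\<close>,
  the limiting density integrates to the limiting tail.\<close>

lemma limit_density_integral:
  fixes \<Phi> \<Phi>' d :: "real \<Rightarrow> real"
  assumes \<Phi>: "\<And>t. (\<Phi> has_real_derivative \<Phi>' t) (at t)"
    and \<Phi>0: "\<Phi> 0 = 0" and mono: "\<And>a b. a < b \<Longrightarrow> \<Phi> a < \<Phi> b"
    and a: "0 < \<alpha>" "\<alpha> < 1" and b0: "0 \<le> \<beta>0" "\<beta>0 \<le> 1"
    and S: "finite S" and d: "\<And>t. t \<in> {\<beta>0<..<1} - S \<Longrightarrow> d t = limit_density \<Phi> \<Phi>' \<alpha> t"
  shows "(d has_integral limit_tail \<Phi> \<alpha> \<beta>0) {\<beta>0..1}"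
proof -
  have \<Phi>_cont: "continuous_on UNIV \<Phi>"
    using \<Phi> by (intro continuous_at_imp_continuous_on) (auto intro: DERIV_isCont)
  have pos_1: "\<Phi> 1 > 0" using mono[of 0 1] \<Phi>0 by simp
  have pos_max: "\<Phi> (max \<alpha> t) > 0" for t using mono[of 0 "max \<alpha> t"] \<Phi>0 a by simp
  have pos_min: "\<Phi> 1 - \<Phi> (min \<alpha> (1 - t)) > 0" for t using mono[of "min \<alpha> (1 - t)" 1] a by simp
  have "continuous_on {\<beta>0..1} (\<lambda>t. \<Phi> (max \<alpha> t))" "continuous_on {\<beta>0..1} (\<lambda>t. \<Phi> (min \<alpha> (1 - t)))"
    by (rule continuous_on_compose2[OF \<Phi>_cont], auto intro!: continuous_intros)+
  then have cont: "continuous_on {\<beta>0..1} (limit_tail \<Phi> \<alpha>)"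
    unfolding limit_tail_def tail_formula_def
    using pos_max pos_min pos_1 by (intro continuous_intros) (auto simp: less_imp_neq[symmetric])
  have "((\<lambda>t. - d t) has_integral (limit_tail \<Phi> \<alpha> 1 - limit_tail \<Phi> \<alpha> \<beta>0)) {\<beta>0..1}"
  proof (rule fundamental_theorem_of_calculus_interior_strong[of "S \<union> {\<alpha>, 1 - \<alpha>}"])
    show "(limit_tail \<Phi> \<alpha> has_vector_derivative - d t) (at t)"
      if t: "t \<in> {\<beta>0<..<1} - (S \<union> {\<alpha>, 1 - \<alpha>})" for t
    proof -
      have "(limit_tail \<Phi> \<alpha> has_real_derivative - limit_density \<Phi> \<Phi>' \<alpha> t) (at t)"
        using t b0 pos_max[of t] pos_min[of t] pos_1 by (intro limit_tail_deriv[OF \<Phi>]) auto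
      moreover have "d t = limit_density \<Phi> \<Phi>' \<alpha> t" using t by (intro d) auto
      ultimately show ?thesis by (simp add: has_real_derivative_iff_has_vector_derivative)
    qed
  qed (use S b0 cont in auto)
  then show ?thesis using limit_tail_at_1[of \<alpha> \<Phi>] a \<Phi>0 by (simp add: has_integral_neg_iff)
qed

lemma density_tail_law:
  fixes d T :: "real \<Rightarrow> real"
  assumes meas: "d \<in> borel_measurable borel" and nonneg: "\<And>t. d t \<ge> 0"
    and zero: "\<And>t. t < 0 \<or> t > 1 \<Longrightarrow> d t = 0"
    and int: "\<And>\<beta>. 0 \<le> \<beta> \<Longrightarrow> \<beta> \<le> 1 \<Longrightarrow> (d has_integral T \<beta>) {\<beta>..1}"
    and T_0: "T 0 = 1" and T_above: "\<And>\<beta>. 1 < \<beta> \<Longrightarrow> T \<beta> = 0"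
  shows "real_distribution (density lborel d)" "absolutely_continuous lborel (density lborel d)"
    and "\<And>\<beta>. 0 \<le> \<beta> \<Longrightarrow> measure (density lborel d) {\<beta>..} = T \<beta>"
proof -
  have restrict: "emeasure (density lborel d) {\<beta>..} = (\<integral>\<^sup>+x. ennreal (indicator {\<beta>..1} x * d x) \<partial>lborel)" for \<beta>
    using meas by (subst emeasure_density) (auto intro!: nn_integral_cong split: split_indicator simp: zero)
  have T_nonneg: "T \<beta> \<ge> 0" if "0 \<le> \<beta>" for \<beta>
    using has_integral_nonneg[OF int nonneg] T_above[of \<beta>] that by (cases "\<beta> \<le> 1") auto
  have tail: "emeasure (density lborel d) {\<beta>..} = ennreal (T \<beta>)" if "0 \<le> \<beta>" for \<beta>
  proof (cases "\<beta> \<le> 1")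
    case True
    then show ?thesis unfolding restrict using nn_integral_has_integral_lebesgue[OF nonneg int] that by simp
  qed (simp add: restrict T_above)
  have "emeasure (density lborel d) UNIV = emeasure (density lborel d) {0..}"
    using meas by (simp add: emeasure_density, intro nn_integral_cong) (auto split: split_indicator simp: zero)
  then have prob: "prob_space (density lborel d)" using tail[of 0] T_0 by (intro prob_spaceI) simp
  then interpret G: prob_space "density lborel d" .
  show "real_distribution (density lborel d)"
    unfolding real_distribution_def real_distribution_axioms_def using prob by simp
  show "absolutely_continuous lborel (density lborel d)"
    using meas by (intro absolutely_continuousI_density) simp
  show "measure (density lborel d) {\<beta>..} = T \<beta>" if "0 \<le> \<beta>" for \<beta>
    using tail[OF that] T_nonneg[OF that] by (simp add: G.emeasure_eq_measure)
qed


section \<open>Convergence in distribution\<close>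

lemma range_walk_measurable:
  assumes "0 < x" "x < N"
  shows "range_walk N x \<in> path_space p \<rightarrow>\<^sub>M count_space UNIV"
proof -
  have "range_walk N x -` {n} \<inter> space (path_space p) =
      {\<omega> \<in> space (path_space p). int n \<le> int (range_walk N x \<omega>)}
      - {\<omega> \<in> space (path_space p). int n + 1 \<le> int (range_walk N x \<omega>)}" for n
    by auto
  then have "range_walk N x -` {n} \<inter> space (path_space p) \<in> sets (path_space p)" for n
    by (simp only:) (intro sets.Diff range_ge_measurable[OF assms])
  then show ?thesis by (subst measurable_count_space_eq_countable) auto
qed

lemma range_ge_prob_antimono:
  assumes "0 < x" "x < N" "m \<le> m'"
  shows "range_ge_prob p N x m' \<le> range_ge_prob p N x m"
proof -
  interpret prob_space "path_space p" by (rule prob_space_path_space)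
  show ?thesis unfolding range_ge_prob_def
    using assms by (intro finite_measure_mono range_ge_measurable) auto
qed

lemma range_ge_prob_nonpos: "m \<le> 0 \<Longrightarrow> range_ge_prob p N x m = 1"
proof -
  interpret prob_space "path_space p" by (rule prob_space_path_space)
  assume "m \<le> 0"
  then have "{\<omega> \<in> space (path_space p). m \<le> int (range_walk N x \<omega>)} = space (path_space p)" by auto
  then show ?thesis by (simp add: range_ge_prob_def prob_space)
qed

text \<open>Since \<open>R_N\<close> is an integer, \<open>R_N/N \<ge> \<beta>\<close> iff \<open>R_N \<ge> \<lceil>\<beta> N\<rceil>\<close>, and \<open>R_N/N \<le> t\<close> iff
  not \<open>R_N \<ge> \<lfloor>t N\<rfloor> + 1\<close>.\<close>

lemma range_tail_eq: "N > 0 \<Longrightarrow> range_tail p N x \<beta> = range_ge_prob p N x \<lceil>\<beta> * real N\<rceil>"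
  unfolding range_tail_def range_ge_prob_def by (simp add: ceiling_le_iff field_simps)

lemma cdf_range_law:
  assumes x: "0 < x" "x < N"
  shows "cdf (range_law p N x) t = 1 - range_ge_prob p N x (\<lfloor>t * real N\<rfloor> + 1)"
proof -
  interpret prob_space "path_space p" by (rule prob_space_path_space)
  have "(\<lambda>n::nat. real n / real N) \<in> count_space UNIV \<rightarrow>\<^sub>M borel" by simp
  then have meas: "(\<lambda>\<omega>. real (range_walk N x \<omega>) / real N) \<in> borel_measurable (path_space p)"
    by (rule measurable_compose[OF range_walk_measurable[OF x]])
  have "real (range_walk N x \<omega>) / real N \<le> t \<longleftrightarrow> \<not> \<lfloor>t * real N\<rfloor> + 1 \<le> int (range_walk N x \<omega>)" for \<omega>
    using x by (simp add: divide_le_eq le_floor_iff[symmetric] mult.commute) linarith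
  then have "(\<lambda>\<omega>. real (range_walk N x \<omega>) / real N) -` {..t} \<inter> space (path_space p) =
      space (path_space p) - {\<omega> \<in> space (path_space p). \<lfloor>t * real N\<rfloor> + 1 \<le> int (range_walk N x \<omega>)}"
    by auto
  then show ?thesis
    unfolding cdf_def range_law_def range_ge_prob_def using meas x
    by (subst measure_distr) (auto intro!: prob_compl range_ge_measurable)
qed

lemma measure_singleton_ac: "absolutely_continuous lborel G \<Longrightarrow> measure G {t} = 0"
  unfolding absolutely_continuous_def by (auto simp: measure_def null_sets_def subset_eq)

lemma cdf_from_tail:
  assumes G: "real_distribution G" "absolutely_continuous lborel G"
    and tail: "\<And>t. 0 \<le> t \<Longrightarrow> measure G {t..} = T t" and T_0: "T 0 = 1"
  shows "cdf G t = (if t < 0 then 0 else 1 - T t)"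
proof -
  interpret G: real_distribution G by (rule G(1))
  have open_tail: "measure G {t<..} = T t" if "0 \<le> t" for t
  proof -
    have "measure G ({t} \<union> {t<..}) = measure G {t} + measure G {t<..}"
      by (intro G.finite_measure_Union) auto
    moreover have "{t} \<union> {t<..} = {t..}" by auto
    ultimately show ?thesis using tail[OF that] measure_singleton_ac[OF G(2)] by simp
  qed
  have cdf_tail: "cdf G t = 1 - measure G {t<..}" for t
    unfolding cdf_def using G.prob_compl[of "{t<..}"] by (simp add: Compl_eq_Diff_UNIV[symmetric])
  show ?thesis
  proof (cases "t < 0")
    case True
    then have "cdf G t \<le> cdf G 0" by (intro G.cdf_nondecreasing) simp
    moreover have "cdf G 0 = 0" using cdf_tail[of 0] open_tail[of 0] T_0 by simp
    ultimately show ?thesis using True G.cdf_nonneg[of t] by simp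
  qed (simp add: cdf_tail open_tail)
qed

context
  fixes p :: "nat \<Rightarrow> real" and x :: "nat \<Rightarrow> nat" and T :: "real \<Rightarrow> real"
  assumes x_inside: "eventually (\<lambda>N. 0 < x N \<and> x N < N) sequentially"
    and range_ge_limit: "\<And>m \<beta>. (\<lambda>N. real_of_int (m N) / real N) \<longlonglongrightarrow> \<beta> \<Longrightarrow>
       eventually (\<lambda>N. m N \<le> int N) sequentially \<Longrightarrow> 0 \<le> \<beta> \<Longrightarrow> \<beta> \<le> 1 \<Longrightarrow>
       (\<lambda>N. range_ge_prob (p N) N (x N) (m N)) \<longlonglongrightarrow> T \<beta>"
    and T_0: "T 0 = 1" and T_above: "\<And>\<beta>. 1 \<le> \<beta> \<Longrightarrow> T \<beta> = 0"
begin

text \<open>Ranges of size at least \<open>N\<close> become negligible, since \<open>T(1) = 0\<close>.\<close>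

lemma range_ge_vanishes:
  assumes "eventually (\<lambda>N. int N \<le> m N) sequentially"
  shows "(\<lambda>N. range_ge_prob (p N) N (x N) (m N)) \<longlonglongrightarrow> 0"
proof (rule tendsto_sandwich[OF _ _ tendsto_const])
  show "(\<lambda>N. range_ge_prob (p N) N (x N) (int N)) \<longlonglongrightarrow> 0"
    using range_ge_limit[of "\<lambda>N. int N" 1] ratio_self T_above[of 1] by simp
  show "eventually (\<lambda>N. range_ge_prob (p N) N (x N) (m N) \<le> range_ge_prob (p N) N (x N) (int N)) sequentially"
    using x_inside assms by eventually_elim (auto intro: range_ge_prob_antimono)
qed (simp add: range_ge_prob_def)

lemma range_tail_tendsto:
  assumes "0 \<le> \<beta>"
  shows "(\<lambda>N. range_tail (p N) N (x N) \<beta>) \<longlonglongrightarrow> T \<beta>"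
proof -
  have "(\<lambda>N. range_ge_prob (p N) N (x N) \<lceil>\<beta> * real N\<rceil>) \<longlonglongrightarrow> T \<beta>"
  proof (cases "\<beta> \<le> 1")
    case True
    then show ?thesis using assms
      by (intro range_ge_limit ceiling_ratio always_eventually allI)
         (simp_all add: ceiling_le_iff mult_left_le_one_le)
  next
    case False
    have "int N \<le> \<lceil>\<beta> * real N\<rceil>" for N
    proof -
      have "real N \<le> \<beta> * real N" using False by (simp add: mult_le_cancel_right1)
      then show ?thesis by (simp add: le_ceiling_iff)
    qed
    then show ?thesis using T_above[of \<beta>] False by (simp add: range_ge_vanishes)
  qed
  then show ?thesis
    by (rule Lim_transform_eventually)
       (use eventually_gt_at_top[of 0] in \<open>eventually_elim, simp add: range_tail_eq\<close>)
qed

lemma range_gt_tendsto: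
  "(\<lambda>N. range_ge_prob (p N) N (x N) (\<lfloor>t * real N\<rfloor> + 1)) \<longlonglongrightarrow> (if t < 0 then 1 else T t)"
proof -
  consider "t < 0" | "0 \<le> t" "t < 1" | "1 \<le> t" by linarith
  then show ?thesis
  proof cases
    case 1
    have "eventually (\<lambda>N. range_ge_prob (p N) N (x N) (\<lfloor>t * real N\<rfloor> + 1) = 1) sequentially"
      using eventually_gt_at_top[of 0]
    proof eventually_elim
      case (elim N)
      then have "t * real N < 0" using 1 by (simp add: mult_neg_pos)
      then show ?case by (intro range_ge_prob_nonpos) linarith
    qed
    then show ?thesis using 1 by (simp add: tendsto_eventually)
  next
    case 2
    have "eventually (\<lambda>N. \<lfloor>t * real N\<rfloor> + 1 \<le> int N) sequentially"
      using eventually_ge_at_top[of "nat \<lceil>1 / (1 - t)\<rceil>"]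
    proof eventually_elim
      case (elim N)
      then have "real N \<ge> 1 / (1 - t)" by linarith
      then have "t * real N \<le> real N - 1" using 2 by (simp add: field_simps)
      then show ?case by linarith
    qed
    then have "(\<lambda>N. range_ge_prob (p N) N (x N) (\<lfloor>t * real N\<rfloor> + 1)) \<longlonglongrightarrow> T t"
      using 2 by (intro range_ge_limit floor_plus_one_ratio) auto
    then show ?thesis using 2 by simp
  next
    case 3
    have "int N \<le> \<lfloor>t * real N\<rfloor> + 1" for N
    proof -
      have "real N \<le> t * real N" using 3 by (simp add: mult_le_cancel_right1)
      then have "int N \<le> \<lfloor>t * real N\<rfloor>" by (simp add: le_floor_iff)
      then show ?thesis by simp
    qed
    then show ?thesis using 3 T_above[of t] by (simp add: range_ge_vanishes)
  qed
qed

text \<open>Weak convergence follows from convergence of the distribution functions at every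
  point (the limit law has no atoms).\<close>

lemma range_law_weak_conv:
  assumes G: "real_distribution G" "absolutely_continuous lborel G"
    and tail: "\<And>t. 0 \<le> t \<Longrightarrow> measure G {t..} = T t"
  shows "weak_conv_m (\<lambda>N. range_law (p N) N (x N)) G"
  unfolding weak_conv_m_def weak_conv_def
proof (intro allI impI)
  fix t :: real
  have "(\<lambda>N. 1 - range_ge_prob (p N) N (x N) (\<lfloor>t * real N\<rfloor> + 1)) \<longlonglongrightarrow> 1 - (if t < 0 then 1 else T t)"
    by (intro tendsto_intros range_gt_tendsto)
  then have "(\<lambda>N. cdf (range_law (p N) N (x N)) t) \<longlonglongrightarrow> 1 - (if t < 0 then 1 else T t)"
    by (rule Lim_transform_eventually) (use x_inside in \<open>eventually_elim, simp add: cdf_range_law\<close>)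
  moreover have "1 - (if t < 0 then 1 else T t) = cdf G t" using cdf_from_tail[OF G tail T_0] by simp
  ultimately show "(\<lambda>N. cdf (range_law (p N) N (x N)) t) \<longlonglongrightarrow> cdf G t" by simp
qed

lemma range_limit_law:
  fixes d :: "real \<Rightarrow> real"
  assumes meas: "d \<in> borel_measurable borel" and nonneg: "\<And>t. d t \<ge> 0"
    and zero: "\<And>t. t < 0 \<or> t > 1 \<Longrightarrow> d t = 0"
    and int: "\<And>\<beta>. 0 \<le> \<beta> \<Longrightarrow> \<beta> \<le> 1 \<Longrightarrow> (d has_integral T \<beta>) {\<beta>..1}"
    and a: "0 \<le> a" "a \<le> 1" "T a = 1"
  shows "real_distribution (density lborel d) \<and> absolutely_continuous lborel (density lborel d)
    \<and> measure (density lborel d) {a..1} = 1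
    \<and> weak_conv_m (\<lambda>N. range_law (p N) N (x N)) (density lborel d)
    \<and> (\<forall>\<beta>\<ge>0. (\<lambda>N. range_tail (p N) N (x N) \<beta>) \<longlonglongrightarrow> T \<beta>)
    \<and> (\<forall>\<beta>\<ge>0. measure (density lborel d) {\<beta>..} = T \<beta>)"
proof -
  note law = density_tail_law[OF meas nonneg zero int T_0 T_above[OF less_imp_le]]
  interpret G: real_distribution "density lborel d" by (rule law(1))
  have "measure (density lborel d) {a..} = measure (density lborel d) {a..1} + measure (density lborel d) {1<..}"
    using a by (subst G.finite_measure_Union[symmetric]) (auto intro!: arg_cong[where f = "measure _"])
  moreover have "measure (density lborel d) {1<..} \<le> measure (density lborel d) {1..}"
    by (intro G.finite_measure_mono) auto
  moreover have "measure (density lborel d) {1..} = 0" using law(3)[of 1] T_above[of 1] by simp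
  ultimately have "measure (density lborel d) {a..1} = 1"
    using law(3)[of a] a measure_nonneg[of "density lborel d" "{1<..}"] by linarith
  then show ?thesis using law range_law_weak_conv range_tail_tendsto by simp
qed

end


section \<open>The two regimes\<close>

lemma tail_sym_0: "0 < \<alpha> \<Longrightarrow> \<alpha> < 1 \<Longrightarrow> tail_sym \<alpha> 0 = 1"
  by (simp add: tail_sym_def Let_def)

lemma tail_sym_above: "0 < \<alpha> \<Longrightarrow> \<alpha> < 1 \<Longrightarrow> 1 \<le> \<beta> \<Longrightarrow> tail_sym \<alpha> \<beta> = 0"
  by (auto simp: tail_sym_def Let_def)

lemma tail_weak_0: "0 < \<alpha> \<Longrightarrow> \<alpha> < 1 \<Longrightarrow> tail_weak c \<alpha> 0 = 1"
  by (simp add: tail_weak_def Let_def)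

lemma tail_weak_above: "0 < \<alpha> \<Longrightarrow> \<alpha> < 1 \<Longrightarrow> 1 \<le> \<beta> \<Longrightarrow> tail_weak c \<alpha> \<beta> = 0"
  by (auto simp: tail_weak_def Let_def min_def max_def)

lemma dens_sym_eq:
  assumes a: "0 < \<alpha>" "\<alpha> < 1" and t: "0 < t" "t < 1" "t \<noteq> \<alpha>" "t \<noteq> 1 - \<alpha>"
  shows "dens_sym \<alpha> t = limit_density id (\<lambda>_. 1) \<alpha> t"
proof -
  consider "t < \<alpha>" "t < 1 - \<alpha>" | "\<alpha> < t" "t < 1 - \<alpha>" | "t < \<alpha>" "1 - \<alpha> < t" | "\<alpha> < t" "1 - \<alpha> < t"
    using t by linarith
  then show ?thesis
  proof cases
    case 4
    then have "limit_density id (\<lambda>_. 1) \<alpha> t = \<alpha> / t\<^sup>2 + (1 - \<alpha>) / t\<^sup>2"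
      using t unfolding limit_density_def by simp
    also have "\<dots> = 1 / t\<^sup>2" by (simp add: add_divide_distrib[symmetric])
    finally show ?thesis using 4 a t unfolding dens_sym_def Let_def by (auto simp: min_def max_def)
  qed (use a t in \<open>auto simp: dens_sym_def limit_density_def Let_def min_def max_def\<close>)
qed

lemma sym_limit_law:
  assumes a: "0 < \<alpha>" "\<alpha> < 1"
  shows "real_distribution (density lborel (dens_sym \<alpha>))
    \<and> absolutely_continuous lborel (density lborel (dens_sym \<alpha>))
    \<and> measure (density lborel (dens_sym \<alpha>)) {min \<alpha> (1 - \<alpha>)..1} = 1
    \<and> weak_conv_m (\<lambda>N. range_law (1/2) N (start_pt \<alpha> N)) (density lborel (dens_sym \<alpha>))
    \<and> (\<forall>\<beta>\<ge>0. (\<lambda>N. range_tail (1/2) N (start_pt \<alpha> N) \<beta>) \<longlonglongrightarrow> tail_sym \<alpha> \<beta>)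
    \<and> (\<forall>\<beta>\<ge>0. measure (density lborel (dens_sym \<alpha>)) {\<beta>..} = tail_sym \<alpha> \<beta>)"
proof (rule range_limit_law[where p = "\<lambda>_. 1/2" and x = "start_pt \<alpha>" and T = "tail_sym \<alpha>"])
  show "(\<lambda>N. range_ge_prob (1/2) N (start_pt \<alpha> N) (m N)) \<longlonglongrightarrow> tail_sym \<alpha> \<beta>"
    if "(\<lambda>N. real_of_int (m N) / real N) \<longlonglongrightarrow> \<beta>" "eventually (\<lambda>N. m N \<le> int N) sequentially"
      "0 \<le> \<beta>" "\<beta> \<le> 1" for m \<beta>
    using sym_range_ge_tendsto[OF a that] limit_tail_sym[OF a that(3,4)] by (simp add: limit_tail_def)
  show "(dens_sym \<alpha> has_integral tail_sym \<alpha> \<beta>) {\<beta>..1}" if "0 \<le> \<beta>" "\<beta> \<le> 1" for \<beta>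
  proof -
    have "(id has_real_derivative 1) (at t)" for t :: real by (simp add: id_def)
    then have "(dens_sym \<alpha> has_integral limit_tail id \<alpha> \<beta>) {\<beta>..1}"
      by (rule limit_density_integral[where S = "{\<alpha>, 1 - \<alpha>}"]) (use a that dens_sym_eq in auto)
    then show ?thesis using limit_tail_sym[OF a that] by simp
  qed
  show "dens_sym \<alpha> \<in> borel_measurable borel" unfolding dens_sym_def Let_def by measurable
qed (use a start_pt_inside tail_sym_0 tail_sym_above in
     \<open>auto simp: dens_sym_def tail_sym_def Let_def\<close>)

definition exp_scale_deriv :: "real \<Rightarrow> real \<Rightarrow> real" where
  "exp_scale_deriv c t = 4 * c * exp (- 4 * c * t)"

lemma weak_limit_law:
  assumes a: "0 < \<alpha>" "\<alpha> < 1" and c: "0 < c"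
  defines "G \<equiv> density lborel (limit_density (exp_scale c) (exp_scale_deriv c) \<alpha>)"
  shows "real_distribution G \<and> absolutely_continuous lborel G \<and> measure G {min \<alpha> (1 - \<alpha>)..1} = 1
    \<and> weak_conv_m (\<lambda>N. range_law (1/2 + c / real N) N (start_pt \<alpha> N)) G
    \<and> (\<forall>\<beta>\<ge>0. (\<lambda>N. range_tail (1/2 + c / real N) N (start_pt \<alpha> N) \<beta>) \<longlonglongrightarrow> tail_weak c \<alpha> \<beta>)
    \<and> (\<forall>\<beta>\<ge>0. measure G {\<beta>..} = tail_weak c \<alpha> \<beta>)"
  unfolding G_def
proof (rule range_limit_law[where p = "\<lambda>N. 1/2 + c / real N" and x = "start_pt \<alpha>" and T = "tail_weak c \<alpha>"])
  have mono: "exp_scale c s < exp_scale c t" if "s < t" for s t using exp_scale_strict_mono[OF c that] .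
  have deriv: "(exp_scale c has_real_derivative exp_scale_deriv c t) (at t)" for t
    unfolding exp_scale_def[abs_def] exp_scale_deriv_def by (auto intro!: derivative_eq_intros)
  show "(\<lambda>N. range_ge_prob (1/2 + c / real N) N (start_pt \<alpha> N) (m N)) \<longlonglongrightarrow> tail_weak c \<alpha> \<beta>"
    if "(\<lambda>N. real_of_int (m N) / real N) \<longlonglongrightarrow> \<beta>" "eventually (\<lambda>N. m N \<le> int N) sequentially"
      "0 \<le> \<beta>" "\<beta> \<le> 1" for m \<beta>
    using weak_range_ge_tendsto[OF a c that] limit_tail_weak[OF a c that(3,4)] by (simp add: limit_tail_def)
  show "(limit_density (exp_scale c) (exp_scale_deriv c) \<alpha> has_integral tail_weak c \<alpha> \<beta>) {\<beta>..1}"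
    if "0 \<le> \<beta>" "\<beta> \<le> 1" for \<beta>
  proof -
    have "(limit_density (exp_scale c) (exp_scale_deriv c) \<alpha> has_integral limit_tail (exp_scale c) \<alpha> \<beta>) {\<beta>..1}"
      by (rule limit_density_integral[OF deriv, where S = "{}"]) (use a that mono in auto)
    then show ?thesis using limit_tail_weak[OF a c that] by simp
  qed
  show "limit_density (exp_scale c) (exp_scale_deriv c) \<alpha> t \<ge> 0" for t
  proof -
    have "exp_scale c \<alpha> \<ge> 0" "exp_scale c 1 - exp_scale c \<alpha> \<ge> 0"
      using mono[of 0 \<alpha>] mono[of \<alpha> 1] a by auto
    moreover have "exp_scale_deriv c s \<ge> 0" for s using c by (simp add: exp_scale_deriv_def)
    ultimately show ?thesis unfolding limit_density_def by (auto intro!: divide_nonneg_nonneg)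
  qed
  show "limit_density (exp_scale c) (exp_scale_deriv c) \<alpha> \<in> borel_measurable borel"
    unfolding limit_density_def exp_scale_def exp_scale_deriv_def by measurable
qed (use a c start_pt_inside tail_weak_0 tail_weak_above in
     \<open>auto simp: limit_density_def tail_weak_def Let_def\<close>)

theorem proposition2p1:
  fixes \<alpha> c :: real
  assumes "0 < \<alpha>" and "\<alpha> < 1" and "0 < c"
  shows
    "(real_distribution (density lborel (dens_sym \<alpha>))
      \<and> measure (density lborel (dens_sym \<alpha>)) {min \<alpha> (1 - \<alpha>)..1} = 1
      \<and> weak_conv_m (\<lambda>N. range_law (1/2) N (start_pt \<alpha> N)) (density lborel (dens_sym \<alpha>))
      \<and> (\<forall>\<beta>\<ge>0. (\<lambda>N. range_tail (1/2) N (start_pt \<alpha> N) \<beta>) \<longlonglongrightarrow> tail_sym \<alpha> \<beta>)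
      \<and> (\<forall>\<beta>\<ge>0. measure (density lborel (dens_sym \<alpha>)) {\<beta>..} = tail_sym \<alpha> \<beta>))
   \<and> (\<exists>G. real_distribution G \<and> absolutely_continuous lborel G
      \<and> measure G {min \<alpha> (1 - \<alpha>)..1} = 1
      \<and> weak_conv_m (\<lambda>N. range_law (1/2 + c / real N) N (start_pt \<alpha> N)) G
      \<and> (\<forall>\<beta>\<ge>0. (\<lambda>N. range_tail (1/2 + c / real N) N (start_pt \<alpha> N) \<beta>)
                  \<longlonglongrightarrow> tail_weak c \<alpha> \<beta>)
      \<and> (\<forall>\<beta>\<ge>0. measure G {\<beta>..} = tail_weak c \<alpha> \<beta>))"
  using sym_limit_law[OF assms(1,2)] weak_limit_law[OF assms] by blast

end
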